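(* Let $\alpha\in(0,1)\cup(1,\infty)$ and let $p_{X,Y}=p_Xp_{Y\mid X}$ be a joint distribution on finite alphabets $\mathcal X\times\mathcal Y$. Then $$I_\alpha^{\mathrm C}(X;Y)=\begin{cases}\min_{\tilde q_{Y\mid X}}\min_{q_Y}F_\alpha^{\mathrm C}(\tilde q_{Y\mid X},q_Y),&\alpha\in(0,1),\\[2pt] \max_{\tilde q_{Y\mid X}}\max_{r_{X\mid Y}}\tilde F_\alpha^{\mathrm C}(\tilde q_{Y\mid X},r_{X\mid Y}),&\alpha\in(1,\infty),\end{cases}$$ and, for all $\alpha\in(0,1)\cup(1,\infty)$, $$I_\alpha^{\mathrm C}(X;Y)=H(p_X)+\max_{r_{X\mid Y}}\frac{\alpha}{\alpha-1}\sum_x p_X(x)\log\sum_y p_{Y\mid X}(y\mid x)\,r_{X\mid Y}(x\mid y)^{1-\frac1\alpha},$$ where $$F_\alpha^{\mathrm C}(\tilde q_{Y\mid X},q_Y):=\frac{\alpha}{1-\alpha}D(p_X\tilde q_{Y\mid X}\|p_Xp_{Y\mid X})+D(p_X\tilde q_{Y\mid X}\|p_Xq_Y),$$ $$\tilde F_\alpha^{\mathrm C}(\tilde q_{Y\mid X},r_{X\mid Y}):=\frac{\alpha}{1-\alpha}D(p_X\tilde q_{Y\mid X}\|p_Xp_{Y\mid X})+\mathbb E^{p_X\tilde q_{Y\mid X}}\!\left[\log\frac{r_{X\mid Y}(X\mid Y)}{p_X(X)}\right].$$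
   Context: All alphabets are finite and $\log$ is natural. $H(p_X)=-\sum_xp_X(x)\log p_X(x)$ is the Shannon entropy and $D(p\|q)=\sum_zp(z)\log\frac{p(z)}{q(z)}$ the Kullback–Leibler divergence. The Rényi divergence of order $\alpha$ is $D_\alpha(p\|q):=\frac{1}{\alpha-1}\log\sum_zp(z)^\alpha q(z)^{1-\alpha}$, and the Augustin–Csiszár mutual information of order $\alpha$ is $I_\alpha^{\mathrm C}(X;Y):=\min_{q_Y}\sum_xp_X(x)D_\alpha(p_{Y\mid X}(\cdot\mid x)\|q_Y)$. Optimizations over $q_Y$ range over distributions on $\mathcal Y$, over $\tilde q_{Y\mid X}$ over all channels (families $\{\tilde q_{Y\mid X}(\cdot\mid x)\}_{x\in\mathcal X}$ of distributions on $\mathcal Y$), and over $r_{X\mid Y}$ over all reverse channels (families $\{r_{X\mid Y}(\cdot\mid y)\}_{y\in\mathcal Y}$ of distributions on $\mathcal X$). $p_X\tilde q_{Y\mid X}$ denotes the joint distribution $p_X(x)\tilde q_{Y\mid X}(y\mid x)$, and $p_Xq_Y$ the product distribution. *)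

theory Defs
  imports "HOL-Analysis.Analysis" "HOL-Library.Extended_Real"
begin

text \<open>All information quantities take values in the extended reals, with the
standard conventions 0 log 0 = 0, 0 log (0/q) = 0 and p log (p/0) = +infinity.\<close>

definition is_dist :: "('z::finite \<Rightarrow> real) \<Rightarrow> bool" where
  "is_dist p \<longleftrightarrow> (\<forall>z. 0 \<le> p z) \<and> (\<Sum>z\<in>UNIV. p z) = 1"

definition is_channel :: "('u::finite \<Rightarrow> 'v::finite \<Rightarrow> real) \<Rightarrow> bool" where
  "is_channel W \<longleftrightarrow> (\<forall>u. is_dist (W u))"

definition entropy :: "('z::finite \<Rightarrow> real) \<Rightarrow> real" where
  "entropy p = - (\<Sum>z\<in>UNIV. (if p z = 0 then 0 else p z * ln (p z)))"

definition KL :: "('z::finite \<Rightarrow> real) \<Rightarrow> ('z \<Rightarrow> real) \<Rightarrow> ereal" where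
  "KL p q = (\<Sum>z\<in>UNIV. (if p z = 0 then 0
                          else if q z = 0 then \<infinity>
                          else ereal (p z * ln (p z / q z))))"

text \<open>Renyi divergence of order alpha: (1/(alpha-1)) log sum p^alpha q^(1-alpha),
  with 0^(1-alpha) = +infinity for alpha > 1, and log 0 = -infinity, log infinity = infinity.\<close>
definition renyi_sum :: "real \<Rightarrow> ('z::finite \<Rightarrow> real) \<Rightarrow> ('z \<Rightarrow> real) \<Rightarrow> ereal" where
  "renyi_sum \<alpha> p q = (\<Sum>z\<in>UNIV. (if p z = 0 then 0
                          else if q z = 0 then (if \<alpha> > 1 then \<infinity> else 0)
                          else ereal (p z powr \<alpha> * q z powr (1 - \<alpha>))))"

definition eln :: "ereal \<Rightarrow> ereal" where
  "eln s = (if s = \<infinity> then \<infinity> else if s \<le> 0 then -\<infinity> else ereal (ln (real_of_ereal s)))"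

definition renyi_div :: "real \<Rightarrow> ('z::finite \<Rightarrow> real) \<Rightarrow> ('z \<Rightarrow> real) \<Rightarrow> ereal" where
  "renyi_div \<alpha> p q = ereal (1 / (\<alpha> - 1)) * eln (renyi_sum \<alpha> p q)"

definition I_C :: "real \<Rightarrow> ('a::finite \<Rightarrow> real) \<Rightarrow> ('a \<Rightarrow> 'b::finite \<Rightarrow> real) \<Rightarrow> ereal" where
  "I_C \<alpha> pX W = (INF q\<in>{q. is_dist q}. (\<Sum>x\<in>UNIV. ereal (pX x) * renyi_div \<alpha> (W x) q))"

definition joint :: "('a \<Rightarrow> real) \<Rightarrow> ('a \<Rightarrow> 'b \<Rightarrow> real) \<Rightarrow> ('a \<times> 'b \<Rightarrow> real)" where
  "joint pX V = (\<lambda>(x, y). pX x * V x y)"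

definition prodd :: "('a \<Rightarrow> real) \<Rightarrow> ('b \<Rightarrow> real) \<Rightarrow> ('a \<times> 'b \<Rightarrow> real)" where
  "prodd pX q = (\<lambda>(x, y). pX x * q y)"

definition F_C :: "real \<Rightarrow> ('a::finite \<Rightarrow> real) \<Rightarrow> ('a \<Rightarrow> 'b::finite \<Rightarrow> real)
    \<Rightarrow> ('a \<Rightarrow> 'b \<Rightarrow> real) \<Rightarrow> ('b \<Rightarrow> real) \<Rightarrow> ereal" where
  "F_C \<alpha> pX W V q = ereal (\<alpha> / (1 - \<alpha>)) * KL (joint pX V) (joint pX W) + KL (joint pX V) (prodd pX q)"

text \<open>Expectation under p_X V of log (r(X|Y) / p_X(X)); the reverse channel is
  r :: 'b => 'a => real with r y x = r(x|y).\<close>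
definition exp_log_ratio :: "('a::finite \<Rightarrow> real) \<Rightarrow> ('a \<Rightarrow> 'b::finite \<Rightarrow> real)
    \<Rightarrow> ('b \<Rightarrow> 'a \<Rightarrow> real) \<Rightarrow> ereal" where
  "exp_log_ratio pX V r = (\<Sum>(x, y)\<in>UNIV. (if pX x * V x y = 0 then 0
                            else if r y x = 0 then -\<infinity>
                            else ereal (pX x * V x y * ln (r y x / pX x))))"

definition F_C_tilde :: "real \<Rightarrow> ('a::finite \<Rightarrow> real) \<Rightarrow> ('a \<Rightarrow> 'b::finite \<Rightarrow> real)
    \<Rightarrow> ('a \<Rightarrow> 'b \<Rightarrow> real) \<Rightarrow> ('b \<Rightarrow> 'a \<Rightarrow> real) \<Rightarrow> ereal" where
  "F_C_tilde \<alpha> pX W V r = ereal (\<alpha> / (1 - \<alpha>)) * KL (joint pX V) (joint pX W) + exp_log_ratio pX V r"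

text \<open>The inner sum  sum_y p(y|x) r(x|y)^(1 - 1/alpha), with 0^(negative) = +infinity.\<close>
definition inner_sum :: "real \<Rightarrow> ('a \<Rightarrow> 'b::finite \<Rightarrow> real) \<Rightarrow> ('b \<Rightarrow> 'a \<Rightarrow> real) \<Rightarrow> 'a \<Rightarrow> ereal" where
  "inner_sum \<alpha> W r x = (\<Sum>y\<in>UNIV. (if W x y = 0 then 0
                          else if r y x = 0 then (if \<alpha> < 1 then \<infinity> else 0)
                          else ereal (W x y * r y x powr (1 - 1 / \<alpha>))))"

definition G_obj :: "real \<Rightarrow> ('a::finite \<Rightarrow> real) \<Rightarrow> ('a \<Rightarrow> 'b::finite \<Rightarrow> real)
    \<Rightarrow> ('b \<Rightarrow> 'a \<Rightarrow> real) \<Rightarrow> ereal" where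
  "G_obj \<alpha> pX W r = ereal (\<alpha> / (\<alpha> - 1)) *
      (\<Sum>x\<in>UNIV. ereal (pX x) * eln (inner_sum \<alpha> W r x))"

end

theory Submission
  imports Defs
begin

text \<open>
  The information \<open>I\<^sub>\<alpha>\<^sup>C\<close> is the minimum over \<open>q\<close> of the Augustin objective
  \<open>f(q) = \<Sum>\<^sub>x p(x) D\<^sub>\<alpha>(W\<^sub>x \<parallel> q)\<close>. A minimiser, the Augustin mean \<open>q\<^sup>*\<close>, exists by compactness of
  the simplex; for \<open>\<alpha> > 1\<close> one first checks that \<open>f\<close> blows up when \<open>q\<close> vanishes on the support
  of some \<open>W\<^sub>x\<close>. Mixing \<open>q\<^sup>*\<close> with a point mass cannot decrease \<open>f\<close>; to first order this yields
  the stationarity condition, which says that \<open>q\<^sup>*\<close> is the output distribution of the tilted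
  channel \<open>V\<^sup>*(y|x) \<propto> W(y|x)\<^sup>\<alpha> q\<^sup>*(y)\<^bsup>1-\<alpha>\<^esup>\<close>.

  Gibbs' inequality gives \<open>F\<^sub>\<alpha>\<^sup>C(V,q) \<ge> f(q)\<close> for \<open>\<alpha> < 1\<close> and
  \<open>F\<^sup>~\<^sub>\<alpha>\<^sup>C(V,r) \<le> H(p) + G(r)\<close> for \<open>\<alpha> > 1\<close>, where \<open>G\<close> is the objective of the last formula;
  Hoelder's inequality gives \<open>H(p) + G(r) \<le> f(q)\<close> for every \<open>\<alpha>\<close>. All three become equalities at
  \<open>V\<^sup>*\<close>, \<open>q\<^sup>*\<close> and the reverse channel \<open>r\<^sup>*(x|y) = p(x) V\<^sup>*(y|x) / q\<^sup>*(y)\<close>, which is a channel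
  precisely because of the fixed-point property of \<open>q\<^sup>*\<close>.
\<close>

lemma is_distD:
  assumes "is_dist v"
  shows "0 \<le> v y" "(\<Sum>y\<in>UNIV. v y) = 1"
  using assms unfolding is_dist_def by auto

lemma is_channelD:
  assumes "is_channel V"
  shows "0 \<le> V x y" "(\<Sum>y\<in>UNIV. V x y) = 1"
  using assms unfolding is_channel_def is_dist_def by auto

lemma is_dist_ex_pos:
  assumes "is_dist v"
  obtains y where "0 < v y"
proof -
  have "(\<Sum>y\<in>UNIV. v y) \<noteq> 0" using is_distD(2)[OF assms] by simp
  then obtain y where "v y \<noteq> 0" by (rule sum.not_neutral_contains_not_neutral)
  then show thesis using that is_distD(1)[OF assms, of y] by (auto simp: less_le)
qed

lemma is_dist_le_one:
  assumes "is_dist v"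
  shows "v y \<le> 1"
  using member_le_sum[of y UNIV v] is_distD[OF assms] by simp

lemma sum_pos_if_dominates_dist:
  fixes u :: "'c::finite \<Rightarrow> real"
  assumes "is_dist v" "\<And>y. 0 \<le> u y" "\<And>y. 0 < v y \<Longrightarrow> 0 < u y"
  shows "0 < (\<Sum>y\<in>UNIV. u y)"
proof -
  obtain y where "0 < v y" using is_dist_ex_pos[OF assms(1)] .
  then have "0 < u y" using assms(3) by blast
  also have "u y \<le> (\<Sum>y\<in>UNIV. u y)" by (rule member_le_sum) (use assms(2) in auto)
  finally show ?thesis .
qed

text \<open>\<open>ln_ratio_mean v u\<close> is \<open>-D(v \<parallel> u)\<close> for a possibly unnormalised \<open>u\<close>.\<close>

definition ln_ratio_mean :: "('c::finite \<Rightarrow> real) \<Rightarrow> ('c \<Rightarrow> real) \<Rightarrow> real" where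
  "ln_ratio_mean v u = (\<Sum>y\<in>UNIV. if v y = 0 then 0 else v y * ln (u y / v y))"

lemma ln_ratio_mean_le_ln_sum:
  fixes u :: "'c::finite \<Rightarrow> real"
  assumes v: "is_dist v" and u0: "\<And>y. 0 \<le> u y" and uv: "\<And>y. 0 < v y \<Longrightarrow> 0 < u y"
  shows "ln_ratio_mean v u \<le> ln (\<Sum>y\<in>UNIV. u y)"
proof -
  define U where "U = (\<Sum>y\<in>UNIV. u y)"
  have U0: "0 < U" unfolding U_def by (rule sum_pos_if_dominates_dist[OF v u0 uv])
  have bound: "(if v y = 0 then 0 else v y * ln (u y / v y)) \<le> u y / U - v y + v y * ln U" for y
  proof (cases "v y = 0")
    case True
    then show ?thesis using u0[of y] U0 by simp
  next
    case False
    then have vp: "0 < v y" using is_distD(1)[OF v, of y] by simp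
    then have up: "0 < u y" using uv by blast
    have "ln (u y / (U * v y)) \<le> u y / (U * v y) - 1"
      using vp up U0 by (intro ln_le_minus_one) simp
    moreover have "ln (u y / v y) = ln (u y / (U * v y)) + ln U"
      using vp up U0 by (simp add: ln_div ln_mult)
    ultimately have "v y * ln (u y / v y) \<le> v y * (u y / (U * v y) - 1) + v y * ln U"
      using vp by (simp add: distrib_left)
    also have "v y * (u y / (U * v y) - 1) = u y / U - v y"
      using vp U0 by (simp add: field_simps)
    finally show ?thesis using False by simp
  qed
  have "ln_ratio_mean v u \<le> (\<Sum>y\<in>UNIV. u y / U - v y + v y * ln U)"
    unfolding ln_ratio_mean_def by (intro sum_mono bound)
  also have "\<dots> = (\<Sum>y\<in>UNIV. u y) / U - 1 + ln U"
    using is_distD(2)[OF v]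
    by (simp add: sum.distrib sum_subtractf sum_divide_distrib flip: sum_distrib_right)
  finally show ?thesis using U0 by (simp add: U_def)
qed

lemma ln_ratio_mean_proportional:
  assumes v: "is_dist v" and "\<And>y. 0 < v y \<Longrightarrow> u y = c * v y" and "0 < c"
  shows "ln_ratio_mean v u = ln c"
proof -
  have "ln_ratio_mean v u = (\<Sum>y\<in>UNIV. v y * ln c)"
    unfolding ln_ratio_mean_def
  proof (intro sum.cong refl)
    fix y
    show "(if v y = 0 then 0 else v y * ln (u y / v y)) = v y * ln c"
      using assms is_distD(1)[OF v, of y] by (cases "v y = 0") auto
  qed
  also have "\<dots> = ln c" using is_distD(2)[OF v] by (simp flip: sum_distrib_right)
  finally show ?thesis .
qed

lemma sum_powr_mult_powr_le:
  fixes a b :: "'c \<Rightarrow> real"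
  assumes S: "finite S" and \<theta>: "0 < \<theta>" "\<theta> < 1"
    and a0: "\<And>y. y \<in> S \<Longrightarrow> 0 \<le> a y" and b0: "\<And>y. y \<in> S \<Longrightarrow> 0 \<le> b y"
  shows "(\<Sum>y\<in>S. a y powr \<theta> * b y powr (1 - \<theta>)) \<le> sum a S powr \<theta> * sum b S powr (1 - \<theta>)"
proof (cases "sum a S = 0 \<or> sum b S = 0")
  case True
  then have "\<forall>y\<in>S. a y = 0 \<or> b y = 0"
    using sum_nonneg_eq_0_iff[OF S] a0 b0 by blast
  then have "(\<Sum>y\<in>S. a y powr \<theta> * b y powr (1 - \<theta>)) = 0"
    by (intro sum.neutral) auto
  then show ?thesis by simp
next
  case False
  define A B where "A = sum a S" and "B = sum b S"
  have A: "0 < A" and B: "0 < B"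
    using False a0 b0 unfolding A_def B_def by (auto intro!: sum_nonneg simp: less_le)
  have "a y powr \<theta> * b y powr (1 - \<theta>)
      \<le> A powr \<theta> * B powr (1 - \<theta>) * (\<theta> * (a y / A) + (1 - \<theta>) * (b y / B))"
    if y: "y \<in> S" for y
  proof (cases "a y = 0 \<or> b y = 0")
    case True
    then show ?thesis
      using a0[OF y] b0[OF y] \<theta> A B by (auto intro!: mult_nonneg_nonneg add_nonneg_nonneg)
  next
    case False
    then have "0 < a y" "0 < b y" using a0[OF y] b0[OF y] by (auto simp: less_le)
    then have "(a y / A) powr \<theta> * (b y / B) powr (1 - \<theta>) \<le> \<theta> * (a y / A) + (1 - \<theta>) * (b y / B)"
      using A B \<theta> by (intro Youngs_inequality_0) auto
    moreover have "a y powr \<theta> * b y powr (1 - \<theta>)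
        = A powr \<theta> * B powr (1 - \<theta>) * ((a y / A) powr \<theta> * (b y / B) powr (1 - \<theta>))"
      using \<open>0 < a y\<close> \<open>0 < b y\<close> A B by (simp add: powr_divide field_simps)
    ultimately show ?thesis using A B by (simp add: mult_left_mono)
  qed
  then have "(\<Sum>y\<in>S. a y powr \<theta> * b y powr (1 - \<theta>))
      \<le> (\<Sum>y\<in>S. A powr \<theta> * B powr (1 - \<theta>) * (\<theta> * (a y / A) + (1 - \<theta>) * (b y / B)))"
    by (intro sum_mono)
  also have "\<dots> = A powr \<theta> * B powr (1 - \<theta>) * (\<theta> * (A / A) + (1 - \<theta>) * (B / B))"
    by (simp add: A_def B_def sum.distrib flip: sum_distrib_left sum_divide_distrib)
  finally show ?thesis using A B by (simp add: A_def B_def)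
qed

lemma ln_sum_powr_mult_powr_le:
  fixes a b :: "'c::finite \<Rightarrow> real"
  assumes \<theta>: "0 < \<theta>" "\<theta> < 1" and a0: "\<And>y. 0 \<le> a y" and b0: "\<And>y. 0 \<le> b y"
    and pos: "0 < (\<Sum>y\<in>UNIV. a y powr \<theta> * b y powr (1 - \<theta>))"
  shows "0 < (\<Sum>y\<in>UNIV. a y)" "0 < (\<Sum>y\<in>UNIV. b y)"
    and "ln (\<Sum>y\<in>UNIV. a y powr \<theta> * b y powr (1 - \<theta>))
           \<le> \<theta> * ln (\<Sum>y\<in>UNIV. a y) + (1 - \<theta>) * ln (\<Sum>y\<in>UNIV. b y)"
proof -
  let ?H = "\<Sum>y\<in>UNIV. a y powr \<theta> * b y powr (1 - \<theta>)"
  have le: "?H \<le> (\<Sum>y\<in>UNIV. a y) powr \<theta> * (\<Sum>y\<in>UNIV. b y) powr (1 - \<theta>)"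
    using \<theta> a0 b0 by (intro sum_powr_mult_powr_le) auto
  have "(\<Sum>y\<in>UNIV. a y) \<noteq> 0" "(\<Sum>y\<in>UNIV. b y) \<noteq> 0"
    using le pos \<theta> by auto
  then show A: "0 < (\<Sum>y\<in>UNIV. a y)" and B: "0 < (\<Sum>y\<in>UNIV. b y)"
    using a0 b0 by (auto intro!: sum_nonneg simp: less_le)
  have "ln ?H \<le> ln ((\<Sum>y\<in>UNIV. a y) powr \<theta> * (\<Sum>y\<in>UNIV. b y) powr (1 - \<theta>))"
    using le pos by simp
  also have "\<dots> = \<theta> * ln (\<Sum>y\<in>UNIV. a y) + (1 - \<theta>) * ln (\<Sum>y\<in>UNIV. b y)"
    using A B by (simp add: ln_mult)
  finally show "ln ?H \<le> \<theta> * ln (\<Sum>y\<in>UNIV. a y) + (1 - \<theta>) * ln (\<Sum>y\<in>UNIV. b y)" .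
qed

lemma powr_diff_le_tangent:
  fixes a b g :: real
  assumes g: "g \<le> 0" and a: "0 < a" and b: "0 < b"
  shows "b powr g - a powr g \<le> g * b powr (g - 1) * (b - a)"
proof -
  have "g * (a / b - 1) \<le> g * ln (a / b)"
    using g a b ln_le_minus_one[of "a / b"] by (intro mult_left_mono_neg) auto
  also have "1 + g * ln (a / b) \<le> exp (g * ln (a / b))" by (rule exp_ge_add_one_self)
  finally have "1 + g * (a / b - 1) \<le> (a / b) powr g"
    using a b by (simp add: powr_def)
  then have "b powr g * (1 + g * (a / b - 1)) \<le> b powr g * (a / b) powr g"
    by (intro mult_left_mono) auto
  then show ?thesis
    using a b by (simp add: powr_divide powr_diff field_simps)
qed

lemma powr_diff_ge_tangent:
  fixes a b g :: real
  assumes g: "0 < g" "g < 1" and a: "0 \<le> a" and b: "0 < b"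
  shows "g * b powr (g - 1) * (b - a) \<le> b powr g - a powr g"
proof -
  have "(a / b) powr g \<le> 1 + g * (a / b - 1)"
  proof (cases "a = 0")
    case True
    then show ?thesis using g by simp
  next
    case False
    then have "(a / b) powr g * 1 powr (1 - g) \<le> g * (a / b) + (1 - g) * 1"
      using a b g by (intro Youngs_inequality_0) auto
    then show ?thesis by (simp add: algebra_simps)
  qed
  then have "b powr g * (a / b) powr g \<le> b powr g * (1 + g * (a / b - 1))"
    by (intro mult_left_mono) auto
  then show ?thesis
    using a b by (simp add: powr_divide powr_diff field_simps)
qed

lemma div_one_plus_le_ln:
  fixes u :: real
  assumes "0 < 1 + u"
  shows "u / (1 + u) \<le> ln (1 + u)"
proof -
  have "ln (1 / (1 + u)) \<le> 1 / (1 + u) - 1" using assms by (intro ln_le_minus_one) simp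
  then show ?thesis using assms by (simp add: ln_div field_simps)
qed

text \<open>
  Bounds on the change of \<open>ln\<close> of a R\<acute>enyi sum \<open>z\<close> when the mass \<open>a\<close> of one output is raised to
  \<open>a + s\<close>. For \<open>\<alpha> > 1\<close> they come from \<open>ln (1 + u) \<le> u\<close> and convexity of \<open>t\<^bsup>1-\<alpha>\<^esup>\<close>; for
  \<open>\<alpha> < 1\<close> the division by \<open>\<alpha> - 1 < 0\<close> requires the lower bound \<open>u / (1 + u) \<le> ln (1 + u)\<close>,
  which is where the extra term \<open>(1 - \<alpha>) w s\<close> in the denominator comes from.
\<close>

lemma perturbed_renyi_sum_pos:
  fixes \<alpha> z w a s :: real
  assumes z: "0 < z" and w: "0 \<le> w" and a: "0 \<le> a" and s: "0 < s"
    and wz: "w * a powr (1 - \<alpha>) \<le> z"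
  shows "0 < z + w * ((a + s) powr (1 - \<alpha>) - a powr (1 - \<alpha>))"
proof (cases "w = 0")
  case False
  then have "0 < w * (a + s) powr (1 - \<alpha>)" using w a s by simp
  then show ?thesis using wz by (simp add: algebra_simps)
qed (use z in simp)

lemma ln_perturbed_renyi_sum_le_gt1:
  fixes \<alpha> z w a s :: real
  assumes \<alpha>: "1 < \<alpha>" and z: "0 < z" and w: "0 \<le> w" and a: "0 < w \<Longrightarrow> 0 < a" and s: "0 < s"
    and wz: "w * a powr (1 - \<alpha>) \<le> z"
  defines "N \<equiv> z + w * ((a + s) powr (1 - \<alpha>) - a powr (1 - \<alpha>))"
  shows "ln (N / z) / (\<alpha> - 1) \<le> - (s * w / (z * (a + s) powr \<alpha>))"
proof (cases "w = 0")
  case False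
  then have "0 < a" using a w by simp
  have N: "0 < N" unfolding N_def using perturbed_renyi_sum_pos[OF z w _ s wz] \<open>0 < a\<close> by simp
  have "N / z - 1 = w * ((a + s) powr (1 - \<alpha>) - a powr (1 - \<alpha>)) / z"
    using z by (simp add: N_def field_simps)
  also have "\<dots> \<le> w * ((1 - \<alpha>) * (a + s) powr (- \<alpha>) * s) / z"
    using powr_diff_le_tangent[of "1 - \<alpha>" a "a + s"] \<alpha> \<open>0 < a\<close> s z w
    by (intro divide_right_mono mult_left_mono) auto
  finally have "N / z - 1 \<le> w * ((1 - \<alpha>) * (a + s) powr (- \<alpha>) * s) / z" .
  moreover have "ln (N / z) \<le> N / z - 1" using N z by (intro ln_le_minus_one) simp
  ultimately have "ln (N / z) / (\<alpha> - 1) \<le> w * ((1 - \<alpha>) * (a + s) powr (- \<alpha>) * s) / z / (\<alpha> - 1)"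
    using \<alpha> by (intro divide_right_mono) auto
  also have "\<dots> = - (s * w / (z * (a + s) powr \<alpha>))"
    using \<alpha> z \<open>0 < a\<close> s by (simp add: powr_minus field_simps)
  finally show ?thesis .
qed (simp add: N_def)

lemma ln_perturbed_renyi_sum_le_lt1:
  fixes \<alpha> z w a s :: real
  assumes \<alpha>: "0 < \<alpha>" "\<alpha> < 1" and z: "0 < z" and w: "0 \<le> w" and a: "0 \<le> a" and s: "0 < s"
  defines "N \<equiv> z + w * ((a + s) powr (1 - \<alpha>) - a powr (1 - \<alpha>))"
  shows "ln (N / z) / (\<alpha> - 1) \<le> - (s * w / (z * (a + s) powr \<alpha> + (1 - \<alpha>) * w * s))"
proof -
  define P where "P = (a + s) powr \<alpha>"
  have P: "0 < P" using a s by (simp add: P_def)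
  define L u where "L = w * ((1 - \<alpha>) * s / P) / z" and "u = N / z - 1"
  have "(1 - \<alpha>) * (a + s) powr (1 - \<alpha> - 1) * (a + s - a) \<le> (a + s) powr (1 - \<alpha>) - a powr (1 - \<alpha>)"
    using \<alpha> a s by (intro powr_diff_ge_tangent) auto
  then have "(1 - \<alpha>) * s / P \<le> (a + s) powr (1 - \<alpha>) - a powr (1 - \<alpha>)"
    by (simp add: P_def powr_minus divide_inverse mult_ac)
  then have "w * ((1 - \<alpha>) * s / P) / z \<le> w * ((a + s) powr (1 - \<alpha>) - a powr (1 - \<alpha>)) / z"
    using z w by (intro divide_right_mono mult_left_mono) auto
  moreover have "u = w * ((a + s) powr (1 - \<alpha>) - a powr (1 - \<alpha>)) / z"
    using z by (simp add: u_def N_def field_simps)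
  ultimately have Lu: "L \<le> u" by (simp add: L_def)
  have L0: "0 \<le> L" using \<alpha> w s z P by (simp add: L_def)
  have "L * (1 + u) \<le> u * (1 + L)" using Lu by (simp add: algebra_simps)
  then have "L / (1 + L) \<le> u / (1 + u)" using Lu L0 by (simp add: divide_simps)
  also have "\<dots> \<le> ln (1 + u)" using L0 Lu by (intro div_one_plus_le_ln) simp
  finally have "L / (1 + L) \<le> ln (N / z)" by (simp add: u_def)
  then have "ln (N / z) / (\<alpha> - 1) \<le> L / (1 + L) / (\<alpha> - 1)"
    using \<alpha> by (intro divide_right_mono_neg) auto
  also have "L / (1 + L) = (1 - \<alpha>) * (s * w) / (z * P + (1 - \<alpha>) * w * s)"
  proof -
    have frac: "(k / Q) / (1 + k / Q) = k / (Q + k)" if "0 < Q" "0 < Q + k" for k Q :: real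
      using that by (simp add: field_simps)
    have "L = (1 - \<alpha>) * (s * w) / (z * P)" using P z by (simp add: L_def field_simps)
    then have "L / (1 + L) = ((1 - \<alpha>) * (s * w) / (z * P)) / (1 + (1 - \<alpha>) * (s * w) / (z * P))"
      by (simp only:)
    also have "\<dots> = (1 - \<alpha>) * (s * w) / (z * P + (1 - \<alpha>) * (s * w))"
      using P z \<alpha> w s by (intro frac add_pos_nonneg) auto
    finally show ?thesis by (simp add: mult_ac)
  qed
  also have "\<dots> / (\<alpha> - 1) = - (s * w / (z * P + (1 - \<alpha>) * w * s))"
    using \<alpha> by (simp add: divide_simps) (simp add: algebra_simps)
  finally show ?thesis by (simp add: P_def)
qed

lemma powr_pairing_tilt:
  fixes \<alpha> w q r :: real
  assumes "0 < \<alpha>" "0 \<le> w" "0 \<le> q" "0 \<le> r" "0 < w \<Longrightarrow> 0 < q"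
  shows "(w powr \<alpha> * q powr (1 - \<alpha>)) powr (1 / \<alpha>) * (q * r) powr (1 - 1 / \<alpha>) = w * r powr (1 - 1 / \<alpha>)"
proof (cases "w = 0 \<or> r = 0")
  case False
  then have pos: "0 < w" "0 < q" "0 < r" using assms by auto
  have "ln ((w powr \<alpha> * q powr (1 - \<alpha>)) powr (1 / \<alpha>) * (q * r) powr (1 - 1 / \<alpha>))
      = ln (w * r powr (1 - 1 / \<alpha>))"
    using pos assms(1) by (simp add: ln_mult field_simps)
  then show ?thesis using pos by simp
qed auto

lemma powr_pairing_reverse:
  fixes \<alpha> w q r :: real
  assumes "0 < \<alpha>" "0 \<le> w" "0 \<le> q" "0 \<le> r" "0 < w \<Longrightarrow> 0 < r"
  shows "(w * r powr (1 - 1 / \<alpha>)) powr \<alpha> * (q * r) powr (1 - \<alpha>) = w powr \<alpha> * q powr (1 - \<alpha>)"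
proof (cases "w = 0 \<or> q = 0")
  case False
  then have pos: "0 < w" "0 < q" "0 < r" using assms by auto
  have "ln ((w * r powr (1 - 1 / \<alpha>)) powr \<alpha> * (q * r) powr (1 - \<alpha>))
      = ln (w powr \<alpha> * q powr (1 - \<alpha>))"
    using pos assms(1) by (simp add: ln_mult field_simps)
  then show ?thesis using pos by simp
qed auto

lemma powr_reverse_term:
  fixes \<alpha> w p q z :: real
  assumes "0 < \<alpha>" "0 < w" "0 < p" "0 < q" "0 < z"
  shows "w * (p * (w powr \<alpha> * q powr (1 - \<alpha>) / z) / q) powr (1 - 1 / \<alpha>)
           = p powr (1 - 1 / \<alpha>) * z powr - (1 - 1 / \<alpha>) * (w powr \<alpha> * q powr (1 - \<alpha>))"
proof -
  have "ln (w * (p * (w powr \<alpha> * q powr (1 - \<alpha>) / z) / q) powr (1 - 1 / \<alpha>))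
      = ln w + (1 - 1 / \<alpha>) * (ln p + \<alpha> * ln w + (1 - \<alpha>) * ln q - ln z - ln q)"
    using assms by (simp add: ln_mult ln_div)
  also have "\<dots> = (1 - 1 / \<alpha>) * ln p - (1 - 1 / \<alpha>) * ln z + \<alpha> * ln w + (1 - \<alpha>) * ln q"
    using assms(1) by (simp add: field_simps)
  also have "\<dots> = ln (p powr (1 - 1 / \<alpha>) * z powr - (1 - 1 / \<alpha>) * (w powr \<alpha> * q powr (1 - \<alpha>)))"
    using assms by (simp add: ln_mult algebra_simps)
  finally show ?thesis using assms by simp
qed

lemma ln_tilt_identity:
  fixes \<alpha> v w q :: real
  assumes "\<alpha> \<noteq> 1" "0 < v" "0 < w" "0 < q"
  shows "\<alpha> / (1 - \<alpha>) * ln (v / w) + ln (v / q) = ln (w powr \<alpha> * q powr (1 - \<alpha>) / v) / (\<alpha> - 1)"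
proof -
  have "1 - \<alpha> \<noteq> 0" "\<alpha> - 1 \<noteq> 0" using assms(1) by auto
  then show ?thesis using assms(2-) by (simp add: ln_div ln_mult field_simps)
qed

lemma ln_reverse_identity:
  fixes \<alpha> v w r p :: real
  assumes "0 < \<alpha>" "\<alpha> \<noteq> 1" "0 < v" "0 < w" "0 < r" "0 < p"
  shows "\<alpha> / (1 - \<alpha>) * ln (v / w) + ln (r / p)
           = \<alpha> / (\<alpha> - 1) * ln (w * r powr (1 - 1 / \<alpha>) * p powr (- (1 - 1 / \<alpha>)) / v)"
proof -
  have "1 - \<alpha> \<noteq> 0" "\<alpha> - 1 \<noteq> 0" using assms(2) by auto
  then show ?thesis using assms(1,3-) by (simp add: ln_div ln_mult field_simps)
qed

lemma continuous_on_coordinate: "continuous_on S (\<lambda>q::'c \<Rightarrow> real. q y)"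
  by (rule continuous_on_subset[OF continuous_on_product_coordinates]) simp

lemma compact_lower_bounded_simplex:
  fixes lo :: "'b::finite \<Rightarrow> real"
  assumes lo: "\<And>y. 0 \<le> lo y"
  shows "compact {v::real^'b. (\<forall>y. lo y \<le> v $ y) \<and> (\<Sum>y\<in>UNIV. v $ y) = 1}"
proof -
  define K where "K = {v::real^'b. (\<forall>y. lo y \<le> v $ y) \<and> (\<Sum>y\<in>UNIV. v $ y) = 1}"
  have "K \<subseteq> cbox 0 1"
  proof
    fix v assume v: "v \<in> K"
    have "0 \<le> v $ y" for y using v lo[of y] unfolding K_def by (auto intro: order_trans)
    moreover have "v $ y \<le> 1" for y
      using v member_le_sum[of y UNIV "vec_nth v"] \<open>\<And>y. 0 \<le> v $ y\<close> unfolding K_def by auto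
    ultimately show "v \<in> cbox 0 1" by (simp add: mem_box_cart)
  qed
  moreover have "closed K"
    unfolding K_def Collect_conj_eq Collect_all_eq
    by (intro closed_Int closed_INT ballI closed_Collect_le closed_Collect_eq continuous_intros)
  ultimately show ?thesis unfolding K_def[symmetric] by (metis bounded_cbox bounded_subset compact_eq_bounded_closed)
qed

lemma dist_lower_bounded_attains_min:
  fixes F :: "('b::finite \<Rightarrow> real) \<Rightarrow> real" and lo :: "'b \<Rightarrow> real"
  assumes S: "S = {q. is_dist q \<and> (\<forall>y. lo y \<le> q y)}"
    and lo: "\<And>y. 0 \<le> lo y" and ne: "S \<noteq> {}" and cont: "continuous_on S F"
  shows "\<exists>q\<in>S. \<forall>q'\<in>S. F q \<le> F q'"
proof -
  define K where "K = {v::real^'b. (\<forall>y. lo y \<le> v $ y) \<and> (\<Sum>y\<in>UNIV. v $ y) = 1}"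
  have K_S: "K = vec_lambda ` S"
  proof -
    have "vec_nth v \<in> S" if v: "v \<in> K" for v
    proof -
      have "lo y \<le> v $ y" for y using v unfolding K_def by simp
      then show ?thesis using v lo order_trans unfolding K_def S is_dist_def by blast
    qed
    then have "K \<subseteq> vec_lambda ` S" using vec_nth_inverse by (metis image_eqI subsetI)
    moreover have "vec_lambda ` S \<subseteq> K" unfolding K_def S is_dist_def by auto
    ultimately show ?thesis by blast
  qed
  have "continuous_on K (F \<circ> vec_nth)"
  proof (rule continuous_on_compose)
    show "continuous_on K vec_nth"
      by (intro continuous_on_coordinatewise_then_product continuous_intros)
    show "continuous_on (vec_nth ` K) F"
      using cont by (simp add: K_S image_image vec_lambda_inverse)
  qed
  moreover have "K \<noteq> {}" using ne K_S by simp
  moreover have "compact K" unfolding K_def by (rule compact_lower_bounded_simplex[OF lo])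
  ultimately obtain v where v: "v \<in> K" "\<And>v'. v' \<in> K \<Longrightarrow> F (vec_nth v) \<le> F (vec_nth v')"
    using continuous_attains_inf[of K "F \<circ> vec_nth"] by auto
  show ?thesis
  proof (intro bexI ballI)
    show "vec_nth v \<in> S" using v(1) K_S by (auto simp: vec_lambda_inverse)
    show "F (vec_nth v) \<le> F q'" if "q' \<in> S" for q'
      using v(2)[of "vec_lambda q'"] that K_S by (simp add: vec_lambda_inverse)
  qed
qed

definition mix_point :: "('b \<Rightarrow> real) \<Rightarrow> 'b \<Rightarrow> real \<Rightarrow> 'b \<Rightarrow> real" where
  "mix_point q y0 s = (\<lambda>y. (q y + (if y = y0 then s else 0)) / (1 + s))"

lemma is_dist_mix_point:
  assumes "is_dist q" "0 \<le> s"
  shows "is_dist (mix_point q y0 s)"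
proof -
  have "(\<Sum>y\<in>UNIV. q y + (if y = y0 then s else 0)) = 1 + s"
    using is_distD(2)[OF assms(1)] by (simp add: sum.distrib)
  then show ?thesis
    using assms is_distD(1)[OF assms(1)]
    by (auto simp: is_dist_def mix_point_def simp flip: sum_divide_distrib)
qed

section \<open>Information measures as finite sums\<close>

lemma sum_UNIV_pair: "(\<Sum>z\<in>UNIV. f z) = (\<Sum>x\<in>UNIV. \<Sum>y\<in>UNIV. f (x, y))"
  for f :: "'c::finite \<times> 'd::finite \<Rightarrow> 'e::comm_monoid_add"
  using sum.cartesian_product[of "\<lambda>x y. f (x, y)" UNIV UNIV] by (simp add: case_prod_beta')

lemma sum_ereal_eq_MInfty:
  fixes f :: "'c \<Rightarrow> ereal"
  assumes "finite S" "i \<in> S" "f i = -\<infinity>" "\<And>j. j \<in> S \<Longrightarrow> f j \<noteq> \<infinity>"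
  shows "sum f S = -\<infinity>"
  using assms
proof (induction S rule: finite_induct)
  case (insert x F)
  have "sum f F \<noteq> \<infinity>" using insert.prems(3) insert.hyps(1) by (simp add: sum_Pinfty)
  then show ?case using insert by (cases "x = i") auto
qed simp

lemma prodd_eq_joint: "prodd pX q = joint pX (\<lambda>_. q)"
  by (simp add: prodd_def joint_def)

lemma KL_neq_MInfty: "KL P Q \<noteq> -\<infinity>"
proof -
  have "(if P z = 0 then 0 else if Q z = 0 then \<infinity> else ereal (P z * ln (P z / Q z))) \<noteq> -\<infinity>" for z
    by simp
  then show ?thesis unfolding KL_def by (induction rule: finite_induct[OF finite]) auto
qed

lemma KL_joint_PInfty:
  assumes "pX x * V x y \<noteq> 0" "Q x y = 0"
  shows "KL (joint pX V) (joint pX Q) = \<infinity>"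
  unfolding KL_def sum_Pinfty using assms by (intro conjI bexI[of _ "(x, y)"]) (auto simp: joint_def)

lemma KL_joint:
  assumes "\<And>x y. pX x * V x y \<noteq> 0 \<Longrightarrow> Q x y \<noteq> 0"
  shows "KL (joint pX V) (joint pX Q) = ereal (\<Sum>x\<in>UNIV. \<Sum>y\<in>UNIV.
           if pX x * V x y = 0 then 0 else pX x * V x y * ln (V x y / Q x y))"
proof -
  have "KL (joint pX V) (joint pX Q) = (\<Sum>x\<in>UNIV. \<Sum>y\<in>UNIV.
          ereal (if pX x * V x y = 0 then 0 else pX x * V x y * ln (V x y / Q x y)))"
    unfolding KL_def sum_UNIV_pair joint_def using assms by (intro sum.cong refl) auto
  then show ?thesis by simp
qed

lemma exp_log_ratio_neq_PInfty: "exp_log_ratio pX V r \<noteq> \<infinity>"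
  unfolding exp_log_ratio_def sum_Pinfty by auto

lemma exp_log_ratio_MInfty:
  assumes "pX x * V x y \<noteq> 0" "r y x = 0"
  shows "exp_log_ratio pX V r = -\<infinity>"
  unfolding exp_log_ratio_def
  by (rule sum_ereal_eq_MInfty[of _ "(x, y)"]) (use assms in \<open>auto split: if_splits\<close>)

lemma exp_log_ratio_real:
  assumes "\<And>x y. pX x * V x y \<noteq> 0 \<Longrightarrow> r y x \<noteq> 0"
  shows "exp_log_ratio pX V r = ereal (\<Sum>x\<in>UNIV. \<Sum>y\<in>UNIV.
           if pX x * V x y = 0 then 0 else pX x * V x y * ln (r y x / pX x))"
proof -
  have "exp_log_ratio pX V r = (\<Sum>x\<in>UNIV. \<Sum>y\<in>UNIV.
          ereal (if pX x * V x y = 0 then 0 else pX x * V x y * ln (r y x / pX x)))"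
    unfolding exp_log_ratio_def sum_UNIV_pair using assms by (intro sum.cong refl) auto
  then show ?thesis by simp
qed

lemma entropy_eq_sum: "entropy p = - (\<Sum>x\<in>UNIV. p x * ln (p x))"
  unfolding entropy_def by (intro arg_cong[of _ _ uminus] sum.cong) auto

section \<open>The Augustin mean\<close>

locale augustin =
  fixes \<alpha> :: real and p :: "'a::finite \<Rightarrow> real" and W :: "'a \<Rightarrow> 'b::finite \<Rightarrow> real"
  assumes \<alpha>_pos: "0 < \<alpha>" and \<alpha>_neq_1: "\<alpha> \<noteq> 1"
    and dist_p: "is_dist p" and channel_W: "is_channel W"
begin

lemma p_nonneg: "0 \<le> p x"
  using is_distD(1)[OF dist_p] .

lemma sum_p: "(\<Sum>x\<in>UNIV. p x) = 1"
  using is_distD(2)[OF dist_p] .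

lemma p_pos_iff: "0 < p x \<longleftrightarrow> p x \<noteq> 0"
  using p_nonneg[of x] by auto

lemma W_nonneg: "0 \<le> W x y"
  using is_channelD(1)[OF channel_W] .

lemma W_ex_pos: obtains y where "0 < W x y"
  using is_dist_ex_pos channel_W unfolding is_channel_def by blast

text \<open>When finite, \<open>tilt_norm q x = exp ((\<alpha> - 1) D\<^sub>\<alpha>(W\<^sub>x \<parallel> q))\<close>; it is also the normalising constant
  of the tilted channel defined below.\<close>

definition tilt_norm :: "('b \<Rightarrow> real) \<Rightarrow> 'a \<Rightarrow> real" where
  "tilt_norm q x = (\<Sum>y\<in>UNIV. W x y powr \<alpha> * q y powr (1 - \<alpha>))"

definition feasible :: "('b \<Rightarrow> real) \<Rightarrow> bool" where
  "feasible q \<longleftrightarrow> is_dist q \<and>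
     (\<forall>x. 0 < p x \<longrightarrow> 0 < tilt_norm q x \<and> (1 < \<alpha> \<longrightarrow> (\<forall>y. 0 < W x y \<longrightarrow> 0 < q y)))"

definition aug_obj :: "('b \<Rightarrow> real) \<Rightarrow> real" where
  "aug_obj q = (\<Sum>x\<in>UNIV. p x * ln (tilt_norm q x)) / (\<alpha> - 1)"

definition avg_renyi :: "('b \<Rightarrow> real) \<Rightarrow> ereal" where
  "avg_renyi q = (\<Sum>x\<in>UNIV. ereal (p x) * renyi_div \<alpha> (W x) q)"

definition augustin_mean :: "('b \<Rightarrow> real) \<Rightarrow> bool" where
  "augustin_mean q \<longleftrightarrow> feasible q \<and> (\<forall>q'. feasible q' \<longrightarrow> aug_obj q \<le> aug_obj q')"

lemma feasibleD:
  assumes "feasible q"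
  shows "is_dist q" "0 < p x \<Longrightarrow> 0 < tilt_norm q x"
    and "1 < \<alpha> \<Longrightarrow> 0 < p x \<Longrightarrow> 0 < W x y \<Longrightarrow> 0 < q y"
  using assms unfolding feasible_def by auto

lemma tilt_norm_ge: "W x y powr \<alpha> * q y powr (1 - \<alpha>) \<le> tilt_norm q x"
  unfolding tilt_norm_def by (rule member_le_sum) auto

lemma tilt_norm_nonneg: "0 \<le> tilt_norm q x"
  unfolding tilt_norm_def by (intro sum_nonneg) simp

lemma tilt_norm_pos:
  assumes "0 < W x y" "0 < q y"
  shows "0 < tilt_norm q x"
proof -
  have "0 < W x y powr \<alpha> * q y powr (1 - \<alpha>)" using assms by simp
  also have "\<dots> \<le> tilt_norm q x" by (rule tilt_norm_ge)
  finally show ?thesis .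
qed

lemma renyi_div_eq:
  assumes q: "is_dist q"
  shows "renyi_div \<alpha> (W x) q =
    (if 0 < tilt_norm q x \<and> (1 < \<alpha> \<longrightarrow> (\<forall>y. 0 < W x y \<longrightarrow> 0 < q y))
     then ereal (ln (tilt_norm q x) / (\<alpha> - 1)) else \<infinity>)"
proof (cases "1 < \<alpha> \<longrightarrow> (\<forall>y. 0 < W x y \<longrightarrow> 0 < q y)")
  case supp: True
  have "renyi_sum \<alpha> (W x) q = (\<Sum>y\<in>UNIV. ereal (W x y powr \<alpha> * q y powr (1 - \<alpha>)))"
    unfolding renyi_sum_def
    using supp W_nonneg[of x] is_distD(1)[OF q] by (intro sum.cong refl) (auto simp: less_le)
  then have sum: "renyi_sum \<alpha> (W x) q = ereal (tilt_norm q x)" by (simp add: tilt_norm_def)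
  show ?thesis
  proof (cases "0 < tilt_norm q x")
    case True
    then show ?thesis using supp by (simp add: renyi_div_def eln_def sum)
  next
    case False
    then have "tilt_norm q x = 0" using tilt_norm_nonneg[of q x] by simp
    moreover have "\<alpha> < 1"
    proof (rule ccontr)
      assume "\<not> \<alpha> < 1"
      then have "1 < \<alpha>" using \<alpha>_neq_1 by simp
      obtain y where "0 < W x y" using W_ex_pos .
      then show False using False supp \<open>1 < \<alpha>\<close> tilt_norm_pos by blast
    qed
    ultimately show ?thesis by (simp add: renyi_div_def eln_def sum)
  qed
next
  case False
  then obtain y where "1 < \<alpha>" "0 < W x y" "q y = 0"
    using is_distD(1)[OF q] by (auto simp: less_le)
  then have "renyi_sum \<alpha> (W x) q = \<infinity>"
    unfolding renyi_sum_def sum_Pinfty by (intro conjI bexI[of _ y]) auto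
  then show ?thesis using False \<open>1 < \<alpha>\<close> by (simp add: renyi_div_def eln_def)
qed

lemma avg_renyi_feasible:
  assumes "feasible q"
  shows "avg_renyi q = ereal (aug_obj q)"
proof -
  have "ereal (p x) * renyi_div \<alpha> (W x) q = ereal (p x * ln (tilt_norm q x) / (\<alpha> - 1))" for x
    using assms renyi_div_eq[OF feasibleD(1)[OF assms], of x] p_pos_iff[of x]
    by (cases "p x = 0") (auto simp: feasible_def zero_ereal_def)
  then show ?thesis
    by (simp add: avg_renyi_def aug_obj_def sum_divide_distrib)
qed

lemma avg_renyi_infeasible:
  assumes "is_dist q" "\<not> feasible q"
  shows "avg_renyi q = \<infinity>"
proof -
  obtain x where "0 < p x"
    and "\<not> (0 < tilt_norm q x \<and> (1 < \<alpha> \<longrightarrow> (\<forall>y. 0 < W x y \<longrightarrow> 0 < q y)))"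
    using assms unfolding feasible_def by blast
  then have "0 < p x" "renyi_div \<alpha> (W x) q = \<infinity>" using renyi_div_eq[OF assms(1)] by auto
  then show ?thesis unfolding avg_renyi_def sum_Pinfty by (intro conjI bexI[of _ x]) auto
qed

lemma feasible_uniform: "feasible (\<lambda>_. 1 / real CARD('b))"
proof -
  have "is_dist (\<lambda>_::'b. 1 / real CARD('b))" by (simp add: is_dist_def)
  moreover have "0 < tilt_norm (\<lambda>_. 1 / real CARD('b)) x" for x
  proof -
    obtain y where "0 < W x y" using W_ex_pos .
    then show ?thesis using tilt_norm_pos by simp
  qed
  ultimately show ?thesis by (simp add: feasible_def)
qed

lemma continuous_on_tilt_norm_lt1:
  assumes "\<alpha> < 1"
  shows "continuous_on {q. is_dist q} (\<lambda>q. tilt_norm q x)"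
  unfolding tilt_norm_def
proof (intro continuous_on_sum continuous_on_mult continuous_on_const continuous_on_powr')
  show "\<forall>q\<in>{q. is_dist q}. 0 \<le> q y \<and> (q y = 0 \<longrightarrow> 0 < 1 - \<alpha>)" for y :: 'b
    using assms is_distD(1) by auto
qed (rule continuous_on_coordinate)

lemma continuous_on_aug_obj:
  assumes \<delta>: "0 < \<delta>" and S: "\<And>q x y. q \<in> S \<Longrightarrow> 0 < p x \<Longrightarrow> 0 < W x y \<Longrightarrow> \<delta> \<le> q y"
  shows "continuous_on S aug_obj"
  unfolding aug_obj_def
proof (intro continuous_on_divide continuous_on_sum continuous_on_const)
  fix x
  show "continuous_on S (\<lambda>q. p x * ln (tilt_norm q x))"
  proof (cases "p x = 0")
    case False
    then have px: "0 < p x" using p_pos_iff by simp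
    have "continuous_on S (\<lambda>q. W x y powr \<alpha> * q y powr (1 - \<alpha>))" for y
    proof (cases "W x y = 0")
      case False
      then have "0 < W x y" using W_nonneg[of x y] by simp
      then have "\<forall>q\<in>S. q y \<noteq> 0" using S[OF _ px] \<delta> by force
      then show ?thesis
        by (intro continuous_on_mult continuous_on_const continuous_on_powr continuous_on_coordinate)
    qed simp
    then have "continuous_on S (\<lambda>q. tilt_norm q x)"
      unfolding tilt_norm_def by (rule continuous_on_sum)
    moreover have "\<forall>q\<in>S. tilt_norm q x \<noteq> 0"
    proof
      fix q assume "q \<in> S"
      obtain y where y: "0 < W x y" using W_ex_pos .
      then have "0 < tilt_norm q x" using tilt_norm_pos S[OF \<open>q \<in> S\<close> px y] \<delta> by simp
      then show "tilt_norm q x \<noteq> 0" by simp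
    qed
    ultimately show ?thesis by (intro continuous_on_mult continuous_on_const continuous_on_ln)
  qed simp
qed (use \<alpha>_neq_1 in simp)

text \<open>Minimising \<open>aug_obj\<close> for \<open>\<alpha> < 1\<close> amounts to maximising the weighted geometric mean of the
  R\<acute>enyi sums, which unlike \<open>aug_obj\<close> is continuous on the whole simplex.\<close>

definition tilt_geomean :: "('b \<Rightarrow> real) \<Rightarrow> real" where
  "tilt_geomean q = (\<Prod>x\<in>{x. 0 < p x}. tilt_norm q x powr p x)"

lemma ln_tilt_geomean:
  assumes q: "feasible q"
  shows "0 < tilt_geomean q" "ln (tilt_geomean q) = (\<alpha> - 1) * aug_obj q"
proof -
  have pos: "\<forall>x\<in>{x. 0 < p x}. 0 < tilt_norm q x powr p x"
    using feasibleD(2)[OF q] by fastforce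
  then show "0 < tilt_geomean q" unfolding tilt_geomean_def by (intro prod_pos) blast
  have "ln (tilt_geomean q) = (\<Sum>x\<in>{x. 0 < p x}. ln (tilt_norm q x powr p x))"
    unfolding tilt_geomean_def by (rule ln_prod) (use pos in auto)
  also have "\<dots> = (\<Sum>x\<in>{x. 0 < p x}. p x * ln (tilt_norm q x))"
    using feasibleD(2)[OF q] by (intro sum.cong refl) (simp add: ln_powr)
  also have "\<dots> = (\<Sum>x\<in>UNIV. p x * ln (tilt_norm q x))"
    by (intro sum.mono_neutral_left) (auto simp: p_pos_iff)
  finally show "ln (tilt_geomean q) = (\<alpha> - 1) * aug_obj q"
    using \<alpha>_neq_1 by (simp add: aug_obj_def)
qed

lemma continuous_on_tilt_geomean:
  assumes "\<alpha> < 1"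
  shows "continuous_on {q. is_dist q} tilt_geomean"
  unfolding tilt_geomean_def
proof (intro continuous_on_prod continuous_on_powr' continuous_on_const)
  show "\<forall>q\<in>{q. is_dist q}. 0 \<le> tilt_norm q x \<and> (tilt_norm q x = 0 \<longrightarrow> 0 < p x)"
    if "x \<in> {x. 0 < p x}" for x
    using that tilt_norm_nonneg by simp
qed (rule continuous_on_tilt_norm_lt1[OF assms])

lemma feasible_if_tilt_geomean_pos:
  assumes "\<alpha> < 1" "is_dist q" "0 < tilt_geomean q"
  shows "feasible q"
proof -
  have "tilt_norm q x \<noteq> 0" if "0 < p x" for x
  proof
    assume "tilt_norm q x = 0"
    then have "tilt_geomean q = 0"
      unfolding tilt_geomean_def using that by (intro prod_zero) (auto intro!: bexI[of _ x])
    then show False using assms(3) by simp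
  qed
  then show ?thesis using assms(1,2) tilt_norm_nonneg by (auto simp: feasible_def less_le)
qed

lemma augustin_mean_exists_lt1:
  assumes \<alpha>1: "\<alpha> < 1"
  obtains q where "augustin_mean q"
proof -
  have "{q. is_dist q} = {q. is_dist q \<and> (\<forall>y. 0 \<le> q y)}" using is_distD(1) by auto
  then have "\<exists>q0\<in>{q. is_dist q}. \<forall>q\<in>{q. is_dist q}. - tilt_geomean q0 \<le> - tilt_geomean q"
    using continuous_on_tilt_geomean[OF \<alpha>1] feasibleD(1)[OF feasible_uniform]
    by (intro dist_lower_bounded_attains_min) (auto intro: continuous_on_minus)
  then obtain q0 where q0: "is_dist q0" and max: "\<And>q. is_dist q \<Longrightarrow> tilt_geomean q \<le> tilt_geomean q0"
    by auto
  have "0 < tilt_geomean q0"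
    using max[OF feasibleD(1)[OF feasible_uniform]] ln_tilt_geomean(1)[OF feasible_uniform] by simp
  then have feasible_q0: "feasible q0" by (rule feasible_if_tilt_geomean_pos[OF \<alpha>1 q0])
  have "aug_obj q0 \<le> aug_obj q" if q: "feasible q" for q
  proof -
    have "ln (tilt_geomean q) \<le> ln (tilt_geomean q0)"
      using max[OF feasibleD(1)[OF q]] ln_tilt_geomean(1)[OF q] by simp
    then have "(\<alpha> - 1) * aug_obj q \<le> (\<alpha> - 1) * aug_obj q0"
      by (simp add: ln_tilt_geomean(2)[OF q] ln_tilt_geomean(2)[OF feasible_q0])
    then show ?thesis using \<alpha>1 mult_le_cancel_left_neg[of "\<alpha> - 1"] by simp
  qed
  then show thesis using feasible_q0 that[of q0] by (simp add: augustin_mean_def)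
qed

lemma ln_tilt_norm_lower_bound_gt1:
  assumes \<alpha>1: "1 < \<alpha>" and q: "feasible q" and m: "0 < m"
    and m_le: "\<And>x y. 0 < p x \<Longrightarrow> 0 < W x y \<Longrightarrow> m \<le> W x y powr \<alpha>"
    and x: "0 < p x" and y: "0 < W x y"
  shows "ln m + (1 - \<alpha>) * ln (q y) \<le> ln (tilt_norm q x)" and "ln m \<le> ln (tilt_norm q x)"
proof -
  have "0 < q y" using feasibleD(3)[OF q \<alpha>1 x y] .
  then have "0 < m * q y powr (1 - \<alpha>)" using m by simp
  moreover have "m * q y powr (1 - \<alpha>) \<le> tilt_norm q x"
    using mult_right_mono[OF m_le[OF x y], of "q y powr (1 - \<alpha>)"]
      tilt_norm_ge[of x y q] by simp
  ultimately have "ln (m * q y powr (1 - \<alpha>)) \<le> ln (tilt_norm q x)" by simp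
  then show ln_Z: "ln m + (1 - \<alpha>) * ln (q y) \<le> ln (tilt_norm q x)"
    using m \<open>0 < q y\<close> by (simp add: ln_mult)
  have "0 \<le> (1 - \<alpha>) * ln (q y)"
    using \<alpha>1 \<open>0 < q y\<close> is_dist_le_one[OF feasibleD(1)[OF q]] by (intro mult_nonpos_nonpos) auto
  then show "ln m \<le> ln (tilt_norm q x)" using ln_Z by linarith
qed

lemma aug_obj_lower_bound_gt1:
  assumes \<alpha>1: "1 < \<alpha>" and q: "feasible q" and m: "0 < m"
    and m_le: "\<And>x y. 0 < p x \<Longrightarrow> 0 < W x y \<Longrightarrow> m \<le> W x y powr \<alpha>"
    and x0: "0 < p x0" and y0: "0 < W x0 y0"
  shows "ln m / (\<alpha> - 1) - p x0 * ln (q y0) \<le> aug_obj q"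
proof -
  have "p x * ln m + (if x = x0 then p x0 * ((1 - \<alpha>) * ln (q y0)) else 0) \<le> p x * ln (tilt_norm q x)"
    for x
  proof (cases "x = x0")
    case True
    then show ?thesis
      using mult_left_mono[OF ln_tilt_norm_lower_bound_gt1(1)[OF \<alpha>1 q m m_le x0 y0] p_nonneg[of x0]]
      by (simp add: algebra_simps)
  next
    case False
    obtain y where y: "0 < W x y" using W_ex_pos .
    show ?thesis
    proof (cases "p x = 0")
      case False
      then have "0 < p x" using p_pos_iff by simp
      then show ?thesis
        using mult_left_mono[OF ln_tilt_norm_lower_bound_gt1(2)[OF \<alpha>1 q m m_le _ y] p_nonneg[of x]]
          \<open>x \<noteq> x0\<close> by simp
    qed (use \<open>x \<noteq> x0\<close> in simp)
  qed
  then have "(\<Sum>x\<in>UNIV. p x * ln m + (if x = x0 then p x0 * ((1 - \<alpha>) * ln (q y0)) else 0))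
      \<le> (\<Sum>x\<in>UNIV. p x * ln (tilt_norm q x))"
    by (rule sum_mono)
  also have "(\<Sum>x\<in>UNIV. p x * ln m + (if x = x0 then p x0 * ((1 - \<alpha>) * ln (q y0)) else 0))
      = ln m + p x0 * ((1 - \<alpha>) * ln (q y0))"
    by (simp add: sum.distrib sum_p flip: sum_distrib_right)
  finally have "(ln m + p x0 * ((1 - \<alpha>) * ln (q y0))) / (\<alpha> - 1) \<le> aug_obj q"
    unfolding aug_obj_def using \<alpha>1 by (intro divide_right_mono) auto
  also have "(ln m + p x0 * ((1 - \<alpha>) * ln (q y0))) / (\<alpha> - 1) = ln m / (\<alpha> - 1) - p x0 * ln (q y0)"
    using \<alpha>1 by (simp add: field_simps)
  finally show ?thesis .
qed

text \<open>For \<open>\<alpha> > 1\<close> the objective blows up as \<open>q\<close> loses mass on the support of some \<open>W\<^sub>x\<close>.\<close>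

lemma small_mass_threshold_gt1:
  assumes \<alpha>1: "1 < \<alpha>"
  obtains \<delta> where "0 < \<delta>" "\<delta> \<le> 1 / real CARD('b)"
    and "\<And>q x y. feasible q \<Longrightarrow> 0 < p x \<Longrightarrow> 0 < W x y \<Longrightarrow> q y < \<delta> \<Longrightarrow>
           aug_obj (\<lambda>_. 1 / real CARD('b)) \<le> aug_obj q"
proof -
  define u where "u = (\<lambda>_::'b. 1 / real CARD('b))"
  define E where "E = {(x, y). 0 < p x \<and> 0 < W x y}"
  obtain x1 where x1: "0 < p x1" using is_dist_ex_pos[OF dist_p] .
  obtain y1 where y1: "0 < W x1 y1" using W_ex_pos .
  define m where "m = Min ((\<lambda>(x, y). W x y powr \<alpha>) ` E)"
  have m: "0 < m" unfolding m_def using x1 y1 by (subst Min_gr_iff) (auto simp: E_def)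
  have m_le: "m \<le> W x y powr \<alpha>" if "0 < p x" "0 < W x y" for x y
    unfolding m_def using that by (intro Min_le) (auto simp: E_def)
  define pm where "pm = Min (p ` {x. 0 < p x})"
  have pm: "0 < pm" unfolding pm_def using x1 by (subst Min_gr_iff) auto
  have pm_le: "pm \<le> p x" if "0 < p x" for x
    unfolding pm_def using that by (intro Min_le) auto
  define \<delta> where "\<delta> = min (1 / real CARD('b)) (exp ((ln m / (\<alpha> - 1) - aug_obj u) / pm))"
  have \<delta>: "0 < \<delta>" by (simp add: \<delta>_def)
  have ln_\<delta>: "pm * ln \<delta> \<le> ln m / (\<alpha> - 1) - aug_obj u"
  proof -
    have "ln \<delta> \<le> ln (exp ((ln m / (\<alpha> - 1) - aug_obj u) / pm))"
      using \<delta> by (subst ln_le_cancel_iff) (auto simp: \<delta>_def)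
    then show ?thesis using pm by (simp add: field_simps)
  qed
  have "aug_obj u \<le> aug_obj q"
    if q: "feasible q" and x: "0 < p x" and y: "0 < W x y" and small: "q y < \<delta>" for q x y
  proof -
    have qy: "0 < q y" using feasibleD(3)[OF q \<alpha>1 x y] .
    have "ln (q y) \<le> 0" using is_dist_le_one[OF feasibleD(1)[OF q]] qy by simp
    then have "p x * ln (q y) \<le> pm * ln (q y)"
      using pm_le[OF x] by (intro mult_right_mono_neg) auto
    also have "\<dots> \<le> pm * ln \<delta>" using pm qy small by (intro mult_left_mono) auto
    finally have "aug_obj u \<le> ln m / (\<alpha> - 1) - p x * ln (q y)" using ln_\<delta> by simp
    also have "\<dots> \<le> aug_obj q" by (rule aug_obj_lower_bound_gt1[OF \<alpha>1 q m m_le x y])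
    finally show ?thesis .
  qed
  moreover have "\<delta> \<le> 1 / real CARD('b)" by (simp add: \<delta>_def)
  ultimately show thesis using that[of \<delta>] \<delta> unfolding u_def by blast
qed

lemma feasible_if_support_pos:
  assumes q: "is_dist q" and pos: "\<And>x y. 0 < p x \<Longrightarrow> 0 < W x y \<Longrightarrow> 0 < q y"
  shows "feasible q"
proof -
  have "0 < tilt_norm q x" if "0 < p x" for x
  proof -
    obtain y where "0 < W x y" using W_ex_pos .
    then show ?thesis using tilt_norm_pos pos[OF that] by blast
  qed
  then show ?thesis using q pos by (simp add: feasible_def)
qed

lemma augustin_mean_exists_gt1:
  assumes \<alpha>1: "1 < \<alpha>"
  obtains q where "augustin_mean q"
proof -
  define u where "u = (\<lambda>_::'b. 1 / real CARD('b))"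
  obtain \<delta> where \<delta>: "0 < \<delta>" "\<delta> \<le> 1 / real CARD('b)"
    and threshold: "\<And>q x y. feasible q \<Longrightarrow> 0 < p x \<Longrightarrow> 0 < W x y \<Longrightarrow> q y < \<delta> \<Longrightarrow> aug_obj u \<le> aug_obj q"
    using small_mass_threshold_gt1[OF \<alpha>1] unfolding u_def by blast
  define lo where "lo y = (if \<exists>x. 0 < p x \<and> 0 < W x y then \<delta> else 0)" for y
  define S where "S = {q. is_dist q \<and> (\<forall>y. lo y \<le> q y)}"
  have S_lo: "\<delta> \<le> q y" if "q \<in> S" "0 < p x" "0 < W x y" for q x y
  proof -
    have "lo y \<le> q y" using that(1) by (simp add: S_def)
    moreover have "\<exists>x. 0 < p x \<and> 0 < W x y" using that(2,3) by blast
    ultimately show ?thesis by (simp add: lo_def)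
  qed
  have feasible_S: "feasible q" if "q \<in> S" for q
  proof (rule feasible_if_support_pos)
    show "is_dist q" using that by (simp add: S_def)
    show "0 < q y" if "0 < p x" "0 < W x y" for x y using S_lo[OF \<open>q \<in> S\<close> that] \<delta> by simp
  qed
  have u: "u \<in> S"
    using feasibleD(1)[OF feasible_uniform] \<delta> by (simp add: S_def lo_def u_def)
  have "continuous_on S aug_obj" by (rule continuous_on_aug_obj[OF \<delta>(1)]) (rule S_lo)
  then have "\<exists>q0\<in>S. \<forall>q\<in>S. aug_obj q0 \<le> aug_obj q"
    by (rule dist_lower_bounded_attains_min[OF S_def, rotated 2]) (use u \<delta> in \<open>auto simp: lo_def\<close>)
  then obtain q0 where q0: "q0 \<in> S" and min: "\<And>q. q \<in> S \<Longrightarrow> aug_obj q0 \<le> aug_obj q"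
    by blast
  have "aug_obj q0 \<le> aug_obj q" if q: "feasible q" for q
  proof (cases "q \<in> S")
    case False
    then obtain y where "q y < lo y" using feasibleD(1)[OF q] by (auto simp: S_def not_le)
    then obtain x where "0 < p x" "0 < W x y" "q y < \<delta>"
      using is_distD(1)[OF feasibleD(1)[OF q], of y] by (auto simp: lo_def split: if_splits)
    then show ?thesis using min[OF u] threshold[OF q] by fastforce
  qed (rule min)
  then show thesis using feasible_S[OF q0] that[of q0] by (simp add: augustin_mean_def)
qed

lemma augustin_mean_exists: obtains q where "augustin_mean q"
proof (cases "\<alpha> < 1")
  case True
  then show thesis using augustin_mean_exists_lt1 that by blast
next
  case False
  then have "1 < \<alpha>" using \<alpha>_neq_1 by simp
  then show thesis using augustin_mean_exists_gt1 that by blast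
qed

text \<open>\<open>tilt_score q y * q y powr - \<alpha>\<close> is minus the partial derivative of \<open>aug_obj\<close> with respect
  to \<open>q y\<close>.\<close>

definition tilt_score :: "('b \<Rightarrow> real) \<Rightarrow> 'b \<Rightarrow> real" where
  "tilt_score q y = (\<Sum>x\<in>UNIV. p x * W x y powr \<alpha> / tilt_norm q x)"

definition mix_gain :: "('b \<Rightarrow> real) \<Rightarrow> 'b \<Rightarrow> real \<Rightarrow> real" where
  "mix_gain q y0 s = (\<Sum>x\<in>UNIV. p x * W x y0 powr \<alpha> /
     (tilt_norm q x * (q y0 + s) powr \<alpha> + max 0 (1 - \<alpha>) * W x y0 powr \<alpha> * s))"

lemma tilt_norm_mix_point:
  assumes q: "is_dist q" and s: "0 < s"
  shows "tilt_norm (mix_point q y0 s) x = (1 + s) powr (\<alpha> - 1) *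
    (tilt_norm q x + W x y0 powr \<alpha> * ((q y0 + s) powr (1 - \<alpha>) - q y0 powr (1 - \<alpha>)))"
proof -
  define \<Delta> where "\<Delta> = W x y0 powr \<alpha> * ((q y0 + s) powr (1 - \<alpha>) - q y0 powr (1 - \<alpha>))"
  have "mix_point q y0 s y powr (1 - \<alpha>)
      = (1 + s) powr (\<alpha> - 1) * (q y + (if y = y0 then s else 0)) powr (1 - \<alpha>)" for y
  proof -
    have "(1 + s) powr (\<alpha> - 1) = inverse ((1 + s) powr (1 - \<alpha>))"
      by (simp flip: powr_minus)
    moreover have "mix_point q y0 s y powr (1 - \<alpha>)
        = (q y + (if y = y0 then s else 0)) powr (1 - \<alpha>) / (1 + s) powr (1 - \<alpha>)"
      unfolding mix_point_def using is_distD(1)[OF q, of y] s by (simp add: powr_divide)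
    ultimately show ?thesis by (simp add: divide_inverse mult.commute)
  qed
  then have "W x y powr \<alpha> * mix_point q y0 s y powr (1 - \<alpha>)
      = (1 + s) powr (\<alpha> - 1) * (W x y powr \<alpha> * q y powr (1 - \<alpha>) + (if y = y0 then \<Delta> else 0))" for y
    by (cases "y = y0") (simp_all add: \<Delta>_def algebra_simps)
  then show ?thesis
    by (simp add: tilt_norm_def sum.distrib flip: sum_distrib_left \<Delta>_def)
qed

lemma mix_point_bound:
  fixes y0 :: 'b
  assumes q: "feasible q" and s: "0 < s" and x: "0 < p x"
  defines "N \<equiv> tilt_norm q x + W x y0 powr \<alpha> * ((q y0 + s) powr (1 - \<alpha>) - q y0 powr (1 - \<alpha>))"
  shows "0 < N"
    and "ln (N / tilt_norm q x) / (\<alpha> - 1) \<le> - (s * W x y0 powr \<alpha> /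
           (tilt_norm q x * (q y0 + s) powr \<alpha> + max 0 (1 - \<alpha>) * W x y0 powr \<alpha> * s))"
proof -
  have Z: "0 < tilt_norm q x" using feasibleD(2)[OF q x] .
  have a: "0 \<le> q y0" using is_distD(1)[OF feasibleD(1)[OF q]] .
  have wz: "W x y0 powr \<alpha> * q y0 powr (1 - \<alpha>) \<le> tilt_norm q x"
    by (rule tilt_norm_ge)
  show "0 < N" unfolding N_def using perturbed_renyi_sum_pos[OF Z _ a s wz] by simp
  show "ln (N / tilt_norm q x) / (\<alpha> - 1) \<le> - (s * W x y0 powr \<alpha> /
      (tilt_norm q x * (q y0 + s) powr \<alpha> + max 0 (1 - \<alpha>) * W x y0 powr \<alpha> * s))"
  proof (cases "\<alpha> < 1")
    case True
    then show ?thesis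
      using ln_perturbed_renyi_sum_le_lt1[OF \<alpha>_pos True Z _ a s] by (simp add: N_def)
  next
    case False
    then have "1 < \<alpha>" using \<alpha>_neq_1 by simp
    moreover have "0 < W x y0 powr \<alpha> \<Longrightarrow> 0 < q y0"
      using feasibleD(3)[OF q \<open>1 < \<alpha>\<close> x] W_nonneg[of x y0] by (simp add: less_le)
    ultimately show ?thesis
      using ln_perturbed_renyi_sum_le_gt1[OF \<open>1 < \<alpha>\<close> Z _ _ s wz] by (simp add: N_def)
  qed
qed

lemma feasible_mix_point:
  assumes q: "feasible q" and s: "0 < s"
  shows "feasible (mix_point q y0 s)"
proof -
  have dist: "is_dist (mix_point q y0 s)" using is_dist_mix_point[OF feasibleD(1)[OF q]] s by simp
  have "0 < tilt_norm (mix_point q y0 s) x" if "0 < p x" for x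
    using mix_point_bound(1)[OF q s that, of y0] tilt_norm_mix_point[OF feasibleD(1)[OF q] s, of y0 x] s
    by simp
  moreover have "0 < mix_point q y0 s y" if "0 < q y" for y
    using that s is_distD(1)[OF feasibleD(1)[OF q]] by (simp add: mix_point_def add_pos_nonneg)
  ultimately show ?thesis using dist feasibleD(3)[OF q] by (simp add: feasible_def)
qed

lemma aug_obj_mix_point_le:
  assumes q: "feasible q" and s: "0 < s"
  shows "aug_obj (mix_point q y0 s) \<le> aug_obj q + s * (1 - mix_gain q y0 s)"
proof -
  define den where "den x = tilt_norm q x * (q y0 + s) powr \<alpha> + max 0 (1 - \<alpha>) * W x y0 powr \<alpha> * s" for x
  have "p x * ln (tilt_norm (mix_point q y0 s) x) / (\<alpha> - 1)
      \<le> p x * ln (1 + s) + p x * ln (tilt_norm q x) / (\<alpha> - 1) - s * (p x * W x y0 powr \<alpha> / den x)"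
    for x
  proof (cases "p x = 0")
    case False
    then have x: "0 < p x" using p_pos_iff by simp
    define N where "N = tilt_norm q x + W x y0 powr \<alpha> * ((q y0 + s) powr (1 - \<alpha>) - q y0 powr (1 - \<alpha>))"
    have N: "0 < N" and bound: "ln (N / tilt_norm q x) / (\<alpha> - 1) \<le> - (s * W x y0 powr \<alpha> / den x)"
      using mix_point_bound[OF q s x, of y0] by (simp_all add: N_def den_def)
    have Z: "0 < tilt_norm q x" using feasibleD(2)[OF q x] .
    have "tilt_norm (mix_point q y0 s) x = (1 + s) powr (\<alpha> - 1) * N"
      using tilt_norm_mix_point[OF feasibleD(1)[OF q] s, of y0 x] by (simp add: N_def)
    then have "ln (tilt_norm (mix_point q y0 s) x)
        = (\<alpha> - 1) * ln (1 + s) + ln (tilt_norm q x) + ln (N / tilt_norm q x)"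
      using N Z s by (simp add: ln_mult ln_div)
    then have "ln (tilt_norm (mix_point q y0 s) x) / (\<alpha> - 1)
        = ln (1 + s) + ln (tilt_norm q x) / (\<alpha> - 1) + ln (N / tilt_norm q x) / (\<alpha> - 1)"
      using \<alpha>_neq_1 by (simp add: add_divide_distrib)
    then show ?thesis
      using mult_left_mono[OF bound p_nonneg[of x]]
      by (simp add: distrib_left mult.left_commute flip: times_divide_eq_right)
  qed simp
  then have "aug_obj (mix_point q y0 s)
      \<le> (\<Sum>x\<in>UNIV. p x * ln (1 + s) + p x * ln (tilt_norm q x) / (\<alpha> - 1) - s * (p x * W x y0 powr \<alpha> / den x))"
    unfolding aug_obj_def sum_divide_distrib by (rule sum_mono)
  also have "\<dots> = (\<Sum>x\<in>UNIV. p x * ln (1 + s)) + (\<Sum>x\<in>UNIV. p x * ln (tilt_norm q x) / (\<alpha> - 1))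
      - s * (\<Sum>x\<in>UNIV. p x * W x y0 powr \<alpha> / den x)"
    by (simp only: sum.distrib sum_subtractf sum_distrib_left)
  also have "\<dots> = ln (1 + s) + aug_obj q - s * mix_gain q y0 s"
    by (simp add: aug_obj_def mix_gain_def den_def sum_p sum_divide_distrib flip: sum_distrib_right)
  also have "ln (1 + s) \<le> s" using s by (intro ln_add_one_self_le_self) simp
  finally show ?thesis by (simp add: algebra_simps)
qed

lemma mix_gain_tendsto:
  assumes q: "feasible q" and a: "0 < q y0"
  shows "(mix_gain q y0 \<longlongrightarrow> tilt_score q y0 / q y0 powr \<alpha>) (at_right 0)"
proof -
  have "((\<lambda>s. p x * W x y0 powr \<alpha> /
      (tilt_norm q x * (q y0 + s) powr \<alpha> + max 0 (1 - \<alpha>) * W x y0 powr \<alpha> * s))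
      \<longlongrightarrow> p x * W x y0 powr \<alpha> / tilt_norm q x / q y0 powr \<alpha>) (at_right 0)" for x
  proof (cases "p x = 0")
    case False
    then have "0 < tilt_norm q x" using feasibleD(2)[OF q] p_pos_iff by blast
    then have "((\<lambda>s. p x * W x y0 powr \<alpha> /
        (tilt_norm q x * (q y0 + s) powr \<alpha> + max 0 (1 - \<alpha>) * W x y0 powr \<alpha> * s))
        \<longlongrightarrow> p x * W x y0 powr \<alpha> /
        (tilt_norm q x * (q y0 + 0) powr \<alpha> + max 0 (1 - \<alpha>) * W x y0 powr \<alpha> * 0)) (at_right 0)"
      using a by (intro tendsto_intros) auto
    then show ?thesis by simp
  qed simp
  then show ?thesis
    unfolding mix_gain_def tilt_score_def sum_divide_distrib by (rule tendsto_sum)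
qed

lemma eventually_mix_gain_gt_one_null:
  assumes q: "feasible q" and null: "q y0 = 0" and score: "0 < tilt_score q y0"
  shows "\<forall>\<^sub>F s in at_right 0. 1 < mix_gain q y0 s"
proof -
  have "tilt_score q y0 \<noteq> 0" using score by simp
  then obtain x0 where "p x0 * W x0 y0 powr \<alpha> / tilt_norm q x0 \<noteq> 0"
    unfolding tilt_score_def by (rule sum.not_neutral_contains_not_neutral)
  then have x0: "0 < p x0" and w: "0 < p x0 * W x0 y0 powr \<alpha>"
    using p_nonneg[of x0] W_nonneg[of x0 y0] by (auto simp: less_le)
  define c where "c = max 0 (1 - \<alpha>)"
  define den where "den x s = tilt_norm q x * s powr \<alpha> + c * W x y0 powr \<alpha> * s" for x s
  have gain: "mix_gain q y0 s = (\<Sum>x\<in>UNIV. p x * W x y0 powr \<alpha> / den x s)" for s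
    by (simp add: mix_gain_def den_def c_def null)
  have den_nonneg: "0 \<le> den x s" if "0 \<le> s" for x s
    unfolding den_def c_def using that tilt_norm_nonneg by (intro add_nonneg_nonneg) auto
  have nonneg: "\<forall>\<^sub>F s in at_right 0. 0 \<le> (s::real)"
    by (rule eventually_mono[OF eventually_at_right_less]) simp
  have "((\<lambda>s::real. s powr \<alpha>) \<longlongrightarrow> 0) (at_right 0)"
    by (rule tendsto_zero_powrI[OF tendsto_ident_at tendsto_const nonneg \<alpha>_pos])
  then have "(den x0 \<longlongrightarrow> tilt_norm q x0 * 0 + c * W x0 y0 powr \<alpha> * 0) (at_right 0)"
    unfolding den_def by (intro tendsto_add tendsto_mult tendsto_const tendsto_ident_at)
  then have "\<forall>\<^sub>F s in at_right 0. den x0 s < p x0 * W x0 y0 powr \<alpha>"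
    using w by (intro order_tendstoD(2)) auto
  moreover have "\<forall>\<^sub>F s in at_right 0. 0 < (s::real)" by (rule eventually_at_right_less)
  ultimately show ?thesis
  proof eventually_elim
    case (elim s)
    then have "den x0 s < p x0 * W x0 y0 powr \<alpha>" "0 < s" by auto
    moreover have "0 < den x0 s"
      unfolding den_def c_def using feasibleD(2)[OF q x0] \<open>0 < s\<close> by (intro add_pos_nonneg) auto
    ultimately have "1 < p x0 * W x0 y0 powr \<alpha> / den x0 s" by simp
    also have "\<dots> \<le> mix_gain q y0 s"
      unfolding gain
    proof (rule member_le_sum)
      show "0 \<le> p x * W x y0 powr \<alpha> / den x s" for x
        using p_nonneg den_nonneg \<open>0 < s\<close> by (simp add: divide_nonneg_nonneg)
    qed auto
    finally show "1 < mix_gain q y0 s" .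
  qed
qed

lemma eventually_mix_gain_gt_one:
  assumes q: "feasible q" and score: "q y0 powr \<alpha> < tilt_score q y0"
  shows "\<forall>\<^sub>F s in at_right 0. 1 < mix_gain q y0 s"
proof (cases "q y0 = 0")
  case False
  then have a: "0 < q y0" using is_distD(1)[OF feasibleD(1)[OF q], of y0] by simp
  then have "1 < tilt_score q y0 / q y0 powr \<alpha>" using score by simp
  with mix_gain_tendsto[OF q a] show ?thesis by (rule order_tendstoD(1))
next
  case True
  then show ?thesis using eventually_mix_gain_gt_one_null[OF q] score by simp
qed

lemma augustin_mean_score_le:
  assumes "augustin_mean q"
  shows "tilt_score q y \<le> q y powr \<alpha>"
proof (rule ccontr)
  assume "\<not> tilt_score q y \<le> q y powr \<alpha>"
  then have gt: "q y powr \<alpha> < tilt_score q y" by simp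
  have q: "feasible q" and min: "\<And>q'. feasible q' \<Longrightarrow> aug_obj q \<le> aug_obj q'"
    using assms by (auto simp: augustin_mean_def)
  obtain s where s: "0 < s" "1 < mix_gain q y s"
    using eventually_happens[OF eventually_conj[OF eventually_at_right_less
          eventually_mix_gain_gt_one[OF q gt]]] by auto
  have "aug_obj (mix_point q y s) \<le> aug_obj q + s * (1 - mix_gain q y s)"
    by (rule aug_obj_mix_point_le[OF q s(1)])
  also have "\<dots> < aug_obj q" using s by (simp add: mult_pos_neg)
  finally show False using min[OF feasible_mix_point[OF q s(1), of y]] by simp
qed

text \<open>Rows and columns outside the supports of \<open>p\<close> and \<open>q\<close> are irrelevant for the objectives; the
  \<open>else\<close> branches below only make \<open>tilted q\<close> and \<open>reverse q\<close> channels.\<close>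

definition tilted :: "('b \<Rightarrow> real) \<Rightarrow> 'a \<Rightarrow> 'b \<Rightarrow> real" where
  "tilted q x y = (if 0 < p x then W x y powr \<alpha> * q y powr (1 - \<alpha>) / tilt_norm q x else W x y)"

definition reverse :: "('b \<Rightarrow> real) \<Rightarrow> 'b \<Rightarrow> 'a \<Rightarrow> real" where
  "reverse q y x = (if 0 < q y then p x * tilted q x y / q y else p x)"

lemma tilted_nonneg: "0 \<le> tilted q x y"
  by (simp add: tilted_def W_nonneg tilt_norm_nonneg)

lemma tilted_pos_iff:
  assumes "feasible q" "0 < p x"
  shows "0 < tilted q x y \<longleftrightarrow> 0 < W x y \<and> 0 < q y"
  using assms(2) feasibleD(2)[OF assms] W_nonneg[of x y] is_distD(1)[OF feasibleD(1)[OF assms(1)], of y]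
  by (auto simp: tilted_def less_le)

lemma is_channel_tilted:
  assumes "feasible q"
  shows "is_channel (tilted q)"
proof -
  have "(\<Sum>y\<in>UNIV. tilted q x y) = 1" for x
  proof (cases "0 < p x")
    case True
    then show ?thesis
      using feasibleD(2)[OF assms True] by (simp add: tilted_def tilt_norm_def flip: sum_divide_distrib)
  qed (simp add: tilted_def is_channelD(2)[OF channel_W])
  then show ?thesis by (simp add: is_channel_def is_dist_def tilted_nonneg)
qed

lemma sum_p_tilted: "(\<Sum>x\<in>UNIV. p x * tilted q x y) = q y powr (1 - \<alpha>) * tilt_score q y"
proof -
  have "p x * tilted q x y = q y powr (1 - \<alpha>) * (p x * W x y powr \<alpha> / tilt_norm q x)" for x
    using p_pos_iff[of x] by (cases "p x = 0") (auto simp: tilted_def)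
  then show ?thesis by (simp add: tilt_score_def sum_distrib_left)
qed

lemma augustin_mean_support:
  assumes q: "augustin_mean q" and "0 < p x" "0 < W x y"
  shows "0 < q y"
proof -
  have "0 < p x * W x y powr \<alpha> / tilt_norm q x"
    using assms feasibleD(2) by (simp add: augustin_mean_def)
  also have "\<dots> \<le> tilt_score q y"
    unfolding tilt_score_def
    by (rule member_le_sum) (auto simp: p_nonneg tilt_norm_nonneg)
  also have "\<dots> \<le> q y powr \<alpha>" by (rule augustin_mean_score_le[OF q])
  finally show ?thesis
    using is_distD(1)[OF feasibleD(1)] q by (fastforce simp: augustin_mean_def less_le)
qed

lemma augustin_mean_fixed_point:
  assumes q: "augustin_mean q"
  shows "(\<Sum>x\<in>UNIV. p x * tilted q x y) = q y"
proof -
  have feasible: "feasible q" and dist: "is_dist q" using q feasibleD(1) by (auto simp: augustin_mean_def)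
  define T where "T y = (\<Sum>x\<in>UNIV. p x * tilted q x y)" for y
  \<comment> \<open>stationarity gives \<open>T \<le> q\<close> pointwise, and both sum to one\<close>
  have le: "T y \<le> q y" for y
  proof (cases "q y = 0")
    case False
    then have "0 < q y" using is_distD(1)[OF dist, of y] by simp
    have "T y = q y powr (1 - \<alpha>) * tilt_score q y" by (simp add: T_def sum_p_tilted)
    also have "\<dots> \<le> q y powr (1 - \<alpha>) * q y powr \<alpha>"
      using augustin_mean_score_le[OF q] by (intro mult_left_mono) auto
    also have "\<dots> = q y" using \<open>0 < q y\<close> by (simp flip: powr_add)
    finally show ?thesis .
  qed (simp add: T_def sum_p_tilted)
  have "(\<Sum>y\<in>UNIV. T y) = (\<Sum>x\<in>UNIV. p x * (\<Sum>y\<in>UNIV. tilted q x y))"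
    unfolding T_def by (subst sum.swap) (simp add: sum_distrib_left)
  also have "\<dots> = 1" using is_channelD(2)[OF is_channel_tilted[OF feasible]] by (simp add: sum_p)
  finally have "(\<Sum>y\<in>UNIV. q y - T y) = 0" using is_distD(2)[OF dist] by (simp add: sum_subtractf)
  then have "q y - T y = 0" using le by (subst (asm) sum_nonneg_eq_0_iff) auto
  then show ?thesis by (simp add: T_def)
qed

lemma is_channel_reverse:
  assumes q: "augustin_mean q"
  shows "is_channel (reverse q)"
proof -
  have "is_dist (reverse q y)" for y
  proof (cases "0 < q y")
    case True
    have "(\<Sum>x\<in>UNIV. reverse q y x) = (\<Sum>x\<in>UNIV. p x * tilted q x y) / q y"
      using True by (simp add: reverse_def sum_divide_distrib)
    then show ?thesis
      using True augustin_mean_fixed_point[OF q] p_nonneg tilted_nonneg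
      by (simp add: is_dist_def reverse_def)
  next
    case False
    then have "reverse q y = p" by (simp add: reverse_def fun_eq_iff)
    then show ?thesis using dist_p by simp
  qed
  then show ?thesis by (simp add: is_channel_def)
qed

lemma augustin_mean_le_avg_renyi:
  assumes q0: "augustin_mean q0" and q: "is_dist q"
  shows "ereal (aug_obj q0) \<le> avg_renyi q"
proof (cases "feasible q")
  case True
  then show ?thesis using q0 by (simp add: augustin_mean_def avg_renyi_feasible)
qed (simp add: avg_renyi_infeasible[OF q])

lemma I_C_eq_aug_obj:
  assumes q0: "augustin_mean q0"
  shows "I_C \<alpha> p W = ereal (aug_obj q0)"
proof -
  have feasible: "feasible q0" using q0 by (simp add: augustin_mean_def)
  have "I_C \<alpha> p W = (INF q\<in>{q. is_dist q}. avg_renyi q)"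
    by (simp add: I_C_def avg_renyi_def)
  also have "\<dots> = ereal (aug_obj q0)"
  proof (rule antisym)
    show "(INF q\<in>{q. is_dist q}. avg_renyi q) \<le> ereal (aug_obj q0)"
      using feasibleD(1)[OF feasible] avg_renyi_feasible[OF feasible] by (intro INF_lower2) auto
    show "ereal (aug_obj q0) \<le> (INF q\<in>{q. is_dist q}. avg_renyi q)"
      using augustin_mean_le_avg_renyi[OF q0] by (intro INF_greatest) simp
  qed
  finally show ?thesis .
qed

section \<open>Variational characterisations\<close>

lemma F_C_real:
  assumes V: "is_channel V" and supp: "\<And>x y. 0 < p x \<Longrightarrow> 0 < V x y \<Longrightarrow> 0 < W x y \<and> 0 < q y"
  shows "F_C \<alpha> p W V q = ereal ((\<Sum>x\<in>UNIV. p x *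
           ln_ratio_mean (V x) (\<lambda>y. W x y powr \<alpha> * q y powr (1 - \<alpha>))) / (\<alpha> - 1))"
proof -
  have pos: "0 < p x" "0 < V x y" if "p x * V x y \<noteq> 0" for x y
    using that p_nonneg[of x] is_channelD(1)[OF V, of x y] by (auto simp: less_le)
  have KL_W: "KL (joint p V) (joint p W) = ereal (\<Sum>x\<in>UNIV. \<Sum>y\<in>UNIV.
      if p x * V x y = 0 then 0 else p x * V x y * ln (V x y / W x y))"
    using supp pos by (intro KL_joint) force
  have KL_q: "KL (joint p V) (prodd p q) = ereal (\<Sum>x\<in>UNIV. \<Sum>y\<in>UNIV.
      if p x * V x y = 0 then 0 else p x * V x y * ln (V x y / q y))"
    unfolding prodd_eq_joint using supp pos by (intro KL_joint) force
  have "\<alpha> / (1 - \<alpha>) * (if p x * V x y = 0 then 0 else p x * V x y * ln (V x y / W x y))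
      + (if p x * V x y = 0 then 0 else p x * V x y * ln (V x y / q y))
      = p x * (if V x y = 0 then 0 else V x y * ln (W x y powr \<alpha> * q y powr (1 - \<alpha>) / V x y))
        / (\<alpha> - 1)" for x y
  proof (cases "p x * V x y = 0")
    case False
    with pos supp have "0 < V x y" "0 < W x y" "0 < q y" by blast+
    have "\<alpha> / (1 - \<alpha>) * (p x * V x y * ln (V x y / W x y)) + p x * V x y * ln (V x y / q y)
        = p x * V x y * (\<alpha> / (1 - \<alpha>) * ln (V x y / W x y) + ln (V x y / q y))"
      by (simp add: algebra_simps)
    also have "\<dots> = p x * (V x y * ln (W x y powr \<alpha> * q y powr (1 - \<alpha>) / V x y)) / (\<alpha> - 1)"
      using ln_tilt_identity[OF \<alpha>_neq_1 \<open>0 < V x y\<close> \<open>0 < W x y\<close> \<open>0 < q y\<close>] by simp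
    finally show ?thesis using False \<open>0 < V x y\<close> by simp
  qed auto
  then show ?thesis
    unfolding F_C_def KL_W KL_q ln_ratio_mean_def
    by (simp add: sum_distrib_left sum_divide_distrib flip: sum.distrib)
qed

lemma F_C_PInfty:
  assumes \<alpha>1: "\<alpha> < 1" and xy: "0 < p x" "0 < V x y" and zero: "W x y = 0 \<or> q y = 0"
  shows "F_C \<alpha> p W V q = \<infinity>"
proof -
  have "KL (joint p V) (joint p W) = \<infinity> \<or> KL (joint p V) (prodd p q) = \<infinity>"
    using zero KL_joint_PInfty[of p x V y W] KL_joint_PInfty[of p x V y "\<lambda>_. q"] xy
    by (auto simp: prodd_eq_joint)
  moreover have "0 < \<alpha> / (1 - \<alpha>)" using \<alpha>1 \<alpha>_pos by simp
  ultimately show ?thesis unfolding F_C_def using KL_neq_MInfty by auto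
qed

lemma avg_renyi_le_F_C:
  assumes \<alpha>1: "\<alpha> < 1" and V: "is_channel V" and q: "is_dist q"
  shows "avg_renyi q \<le> F_C \<alpha> p W V q"
proof (cases "\<forall>x y. 0 < p x \<longrightarrow> 0 < V x y \<longrightarrow> 0 < W x y \<and> 0 < q y")
  case False
  then obtain x y where "0 < p x" "0 < V x y" "W x y = 0 \<or> q y = 0"
    using W_nonneg is_distD(1)[OF q] by (auto simp: less_le)
  then show ?thesis using F_C_PInfty[OF \<alpha>1] by simp
next
  case True
  define u where "u x = (\<lambda>y. W x y powr \<alpha> * q y powr (1 - \<alpha>))" for x
  have u_nonneg: "0 \<le> u x y" for x y by (simp add: u_def)
  have u_pos: "0 < u x y" if "0 < p x" "0 < V x y" for x y
    using True[rule_format, OF that] by (simp add: u_def)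
  have feasible: "feasible q"
  proof -
    have "0 < tilt_norm q x" if "0 < p x" for x
      unfolding tilt_norm_def u_def[symmetric]
      using sum_pos_if_dominates_dist[of "V x" "u x"] is_channelD[OF V] u_nonneg u_pos that
      by (simp add: is_dist_def)
    then show ?thesis using q \<alpha>1 by (simp add: feasible_def)
  qed
  have "p x * ln (tilt_norm q x) / (\<alpha> - 1) \<le> p x * ln_ratio_mean (V x) (u x) / (\<alpha> - 1)" for x
  proof (cases "p x = 0")
    case False
    then have "0 < p x" using p_pos_iff by simp
    then have "ln_ratio_mean (V x) (u x) \<le> ln (tilt_norm q x)"
      unfolding tilt_norm_def u_def[symmetric]
      using is_channelD[OF V] u_nonneg u_pos
      by (intro ln_ratio_mean_le_ln_sum) (auto simp: is_dist_def)
    then show ?thesis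
      using \<alpha>1 \<open>0 < p x\<close> by (intro divide_right_mono_neg mult_left_mono) auto
  qed simp
  then have "aug_obj q \<le> (\<Sum>x\<in>UNIV. p x * ln_ratio_mean (V x) (u x)) / (\<alpha> - 1)"
    unfolding aug_obj_def sum_divide_distrib by (rule sum_mono)
  moreover have "F_C \<alpha> p W V q = ereal ((\<Sum>x\<in>UNIV. p x * ln_ratio_mean (V x) (u x)) / (\<alpha> - 1))"
    unfolding u_def by (rule F_C_real[OF V]) (use True in blast)
  ultimately show ?thesis using avg_renyi_feasible[OF feasible] by simp
qed

lemma F_C_tilted:
  assumes q: "feasible q"
  shows "F_C \<alpha> p W (tilted q) q = ereal (aug_obj q)"
proof -
  have eq: "p x * ln_ratio_mean (tilted q x) (\<lambda>y. W x y powr \<alpha> * q y powr (1 - \<alpha>))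
      = p x * ln (tilt_norm q x)" for x
  proof (cases "p x = 0")
    case False
    then have x: "0 < p x" using p_pos_iff by simp
    have "ln_ratio_mean (tilted q x) (\<lambda>y. W x y powr \<alpha> * q y powr (1 - \<alpha>)) = ln (tilt_norm q x)"
      using is_channel_tilted[OF q] feasibleD(2)[OF q x] x
      by (intro ln_ratio_mean_proportional) (auto simp: is_channel_def tilted_def)
    then show ?thesis by simp
  qed simp
  have F: "F_C \<alpha> p W (tilted q) q = ereal ((\<Sum>x\<in>UNIV. p x *
      ln_ratio_mean (tilted q x) (\<lambda>y. W x y powr \<alpha> * q y powr (1 - \<alpha>))) / (\<alpha> - 1))"
    by (rule F_C_real[OF is_channel_tilted[OF q]]) (use tilted_pos_iff[OF q] in blast)
  show ?thesis unfolding F aug_obj_def by (simp only: eq)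
qed

lemma INF_F_C_eq_aug_obj:
  assumes \<alpha>1: "\<alpha> < 1" and q0: "augustin_mean q0"
  shows "(INF V\<in>{V. is_channel V}. INF q\<in>{q. is_dist q}. F_C \<alpha> p W V q) = ereal (aug_obj q0)"
proof (rule antisym)
  have feasible: "feasible q0" using q0 by (simp add: augustin_mean_def)
  show "(INF V\<in>{V. is_channel V}. INF q\<in>{q. is_dist q}. F_C \<alpha> p W V q) \<le> ereal (aug_obj q0)"
    using is_channel_tilted[OF feasible] feasibleD(1)[OF feasible] F_C_tilted[OF feasible]
    by (intro INF_lower2[of "tilted q0"] INF_lower2[of q0]) auto
  show "ereal (aug_obj q0) \<le> (INF V\<in>{V. is_channel V}. INF q\<in>{q. is_dist q}. F_C \<alpha> p W V q)"
    using augustin_mean_le_avg_renyi[OF q0] avg_renyi_le_F_C[OF \<alpha>1]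
    by (intro INF_greatest) (auto intro: order_trans)
qed

definition inner_sum_real :: "('b \<Rightarrow> 'a \<Rightarrow> real) \<Rightarrow> 'a \<Rightarrow> real" where
  "inner_sum_real r x = (\<Sum>y\<in>UNIV. W x y * r y x powr (1 - 1 / \<alpha>))"

lemma inner_sum_eq_real:
  assumes "\<And>y. \<alpha> < 1 \<Longrightarrow> 0 < W x y \<Longrightarrow> 0 < r y x"
  shows "inner_sum \<alpha> W r x = ereal (inner_sum_real r x)"
proof -
  have "inner_sum \<alpha> W r x = (\<Sum>y\<in>UNIV. ereal (W x y * r y x powr (1 - 1 / \<alpha>)))"
    unfolding inner_sum_def using assms W_nonneg[of x] by (intro sum.cong refl) (auto simp: less_le)
  then show ?thesis by (simp add: inner_sum_real_def)
qed

lemma G_obj_real: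
  assumes "\<And>x. 0 < p x \<Longrightarrow> inner_sum \<alpha> W r x = ereal (inner_sum_real r x) \<and> 0 < inner_sum_real r x"
  shows "G_obj \<alpha> p W r = ereal (\<alpha> / (\<alpha> - 1) * (\<Sum>x\<in>UNIV. p x * ln (inner_sum_real r x)))"
proof -
  have "ereal (p x) * eln (inner_sum \<alpha> W r x) = ereal (p x * ln (inner_sum_real r x))" for x
    using assms[of x] p_pos_iff[of x] by (cases "p x = 0") (auto simp: eln_def zero_ereal_def)
  then show ?thesis by (simp add: G_obj_def)
qed

lemma F_C_tilde_real:
  assumes V: "is_channel V" and supp: "\<And>x y. 0 < p x \<Longrightarrow> 0 < V x y \<Longrightarrow> 0 < W x y \<and> 0 < r y x"
  shows "F_C_tilde \<alpha> p W V r = ereal (\<Sum>x\<in>UNIV. p x * (\<alpha> / (\<alpha> - 1) *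
           ln_ratio_mean (V x) (\<lambda>y. W x y * r y x powr (1 - 1 / \<alpha>) * p x powr - (1 - 1 / \<alpha>))))"
proof -
  have pos: "0 < p x" "0 < V x y" if "p x * V x y \<noteq> 0" for x y
    using that p_nonneg[of x] is_channelD(1)[OF V, of x y] by (auto simp: less_le)
  have KL_W: "KL (joint p V) (joint p W) = ereal (\<Sum>x\<in>UNIV. \<Sum>y\<in>UNIV.
      if p x * V x y = 0 then 0 else p x * V x y * ln (V x y / W x y))"
    using supp pos by (intro KL_joint) force
  have ratio: "exp_log_ratio p V r = ereal (\<Sum>x\<in>UNIV. \<Sum>y\<in>UNIV.
      if p x * V x y = 0 then 0 else p x * V x y * ln (r y x / p x))"
    using supp pos by (intro exp_log_ratio_real) force
  have "\<alpha> / (1 - \<alpha>) * (if p x * V x y = 0 then 0 else p x * V x y * ln (V x y / W x y))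
      + (if p x * V x y = 0 then 0 else p x * V x y * ln (r y x / p x))
      = p x * (\<alpha> / (\<alpha> - 1) * (if V x y = 0 then 0 else
          V x y * ln (W x y * r y x powr (1 - 1 / \<alpha>) * p x powr - (1 - 1 / \<alpha>) / V x y)))" for x y
  proof (cases "p x * V x y = 0")
    case False
    with pos supp have "0 < p x" "0 < V x y" "0 < W x y" "0 < r y x" by blast+
    have "\<alpha> / (1 - \<alpha>) * (p x * V x y * ln (V x y / W x y)) + p x * V x y * ln (r y x / p x)
        = p x * V x y * (\<alpha> / (1 - \<alpha>) * ln (V x y / W x y) + ln (r y x / p x))"
      by (simp add: algebra_simps)
    also have "\<dots> = p x * (\<alpha> / (\<alpha> - 1) *
        (V x y * ln (W x y * r y x powr (1 - 1 / \<alpha>) * p x powr - (1 - 1 / \<alpha>) / V x y)))"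
      using ln_reverse_identity[OF \<alpha>_pos \<alpha>_neq_1 \<open>0 < V x y\<close> \<open>0 < W x y\<close> \<open>0 < r y x\<close> \<open>0 < p x\<close>]
      by simp
    finally show ?thesis using False \<open>0 < V x y\<close> by simp
  qed auto
  then show ?thesis
    unfolding F_C_tilde_def KL_W ratio ln_ratio_mean_def
    by (simp add: sum_distrib_left flip: sum.distrib)
qed

lemma F_C_tilde_tilted_reverse:
  assumes q: "feasible q"
  shows "F_C_tilde \<alpha> p W (tilted q) (reverse q) = F_C \<alpha> p W (tilted q) q"
proof -
  have pos: "0 < p x" "0 < W x y" "0 < q y" if "p x * tilted q x y \<noteq> 0" for x y
    using that tilted_pos_iff[OF q] p_nonneg[of x] tilted_nonneg[of q x y] by (auto simp: less_le)
  have rev: "reverse q y x / p x = tilted q x y / q y" if "p x * tilted q x y \<noteq> 0" for x y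
    using pos[OF that] by (simp add: reverse_def)
  have rev_nonzero: "reverse q y x \<noteq> 0" if "p x * tilted q x y \<noteq> 0" for x y
    using pos[OF that] that by (simp add: reverse_def)
  have "exp_log_ratio p (tilted q) (reverse q) = ereal (\<Sum>x\<in>UNIV. \<Sum>y\<in>UNIV.
      if p x * tilted q x y = 0 then 0 else p x * tilted q x y * ln (reverse q y x / p x))"
    by (rule exp_log_ratio_real) (rule rev_nonzero)
  also have "\<dots> = ereal (\<Sum>x\<in>UNIV. \<Sum>y\<in>UNIV.
      if p x * tilted q x y = 0 then 0 else p x * tilted q x y * ln (tilted q x y / q y))"
    using rev by (intro arg_cong[where f = ereal] sum.cong refl) auto
  also have "\<dots> = KL (joint p (tilted q)) (prodd p q)"
    unfolding prodd_eq_joint by (rule KL_joint[symmetric]) (drule pos(3), simp)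
  finally show ?thesis by (simp add: F_C_tilde_def F_C_def)
qed

lemma G_obj_MInfty_unsupported:
  assumes \<alpha>1: "\<alpha> < 1" and x: "0 < p x" and y: "0 < W x y" and r: "r y x = 0"
  shows "G_obj \<alpha> p W r = -\<infinity>"
proof -
  have "inner_sum \<alpha> W r x = \<infinity>"
    unfolding inner_sum_def sum_Pinfty using \<alpha>1 y r by (intro conjI bexI[of _ y]) auto
  then have "(\<Sum>x\<in>UNIV. ereal (p x) * eln (inner_sum \<alpha> W r x)) = \<infinity>"
    unfolding sum_Pinfty using x by (intro conjI bexI[of _ x]) (auto simp: eln_def)
  moreover have "\<alpha> / (\<alpha> - 1) < 0" using \<alpha>1 \<alpha>_pos by (simp add: divide_pos_neg)
  ultimately show ?thesis using \<alpha>_pos \<alpha>_neq_1 by (simp add: G_obj_def)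
qed

lemma G_obj_MInfty_null:
  assumes \<alpha>1: "1 < \<alpha>" and x: "0 < p x" and null: "inner_sum_real r x = 0"
  shows "G_obj \<alpha> p W r = -\<infinity>"
proof -
  have fin: "inner_sum \<alpha> W r x' = ereal (inner_sum_real r x')" for x'
    using \<alpha>1 by (intro inner_sum_eq_real) simp
  have "(\<Sum>x\<in>UNIV. ereal (p x) * eln (inner_sum \<alpha> W r x)) = -\<infinity>"
    using x null p_nonneg by (intro sum_ereal_eq_MInfty[of _ x]) (auto simp: fin eln_def not_less)
  moreover have "0 < \<alpha> / (\<alpha> - 1)" using \<alpha>1 by simp
  ultimately show ?thesis using \<alpha>_pos \<alpha>_neq_1 by (simp add: G_obj_def)
qed

lemma inner_sum_real_pos_lt1:
  assumes \<alpha>1: "\<alpha> < 1" and supp: "\<And>y. 0 < W x y \<Longrightarrow> 0 < r y x"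
  shows "0 < inner_sum_real r x"
proof -
  obtain y where y: "0 < W x y" using W_ex_pos .
  then have "0 < W x y * r y x powr (1 - 1 / \<alpha>)" using supp[OF y] by simp
  also have "\<dots> \<le> inner_sum_real r x"
    unfolding inner_sum_real_def by (rule member_le_sum) (auto simp: W_nonneg)
  finally show ?thesis .
qed

lemma G_obj_cases:
  assumes r: "is_channel r"
  shows "G_obj \<alpha> p W r = -\<infinity> \<or>
    (\<forall>x. 0 < p x \<longrightarrow> (\<forall>y. \<alpha> < 1 \<longrightarrow> 0 < W x y \<longrightarrow> 0 < r y x) \<and> 0 < inner_sum_real r x)"
proof (rule disjCI)
  assume "\<not> (\<forall>x. 0 < p x \<longrightarrow> (\<forall>y. \<alpha> < 1 \<longrightarrow> 0 < W x y \<longrightarrow> 0 < r y x) \<and> 0 < inner_sum_real r x)"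
  then obtain x where x: "0 < p x"
    and bad: "\<not> (\<forall>y. \<alpha> < 1 \<longrightarrow> 0 < W x y \<longrightarrow> 0 < r y x) \<or> inner_sum_real r x \<le> 0"
    by auto
  show "G_obj \<alpha> p W r = -\<infinity>"
  proof (cases "\<forall>y. \<alpha> < 1 \<longrightarrow> 0 < W x y \<longrightarrow> 0 < r y x")
    case False
    then obtain y where "\<alpha> < 1" "0 < W x y" "r y x = 0"
      using is_channelD(1)[OF r] by (auto simp: less_le)
    then show ?thesis using G_obj_MInfty_unsupported x by blast
  next
    case True
    have "1 < \<alpha>"
    proof (rule ccontr)
      assume "\<not> 1 < \<alpha>"
      then have "\<alpha> < 1" using \<alpha>_neq_1 by simp
      then have "0 < inner_sum_real r x" using True by (intro inner_sum_real_pos_lt1) auto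
      then show False using bad True by simp
    qed
    moreover have "inner_sum_real r x = 0"
      using bad True by (simp add: inner_sum_real_def W_nonneg sum_nonneg order.antisym)
    ultimately show ?thesis using G_obj_MInfty_null x by blast
  qed
qed

lemma inner_sum_real_holder_gt1:
  assumes \<alpha>1: "1 < \<alpha>" and q: "feasible q" and r: "is_channel r" and x: "0 < p x"
    and B: "0 < inner_sum_real r x"
  defines "C \<equiv> \<Sum>y\<in>UNIV. q y * r y x"
  shows "0 < C" and "\<alpha> / (\<alpha> - 1) * ln (inner_sum_real r x) \<le> ln (tilt_norm q x) / (\<alpha> - 1) + ln C"
proof -
  have "(\<Sum>y\<in>UNIV. (W x y powr \<alpha> * q y powr (1 - \<alpha>)) powr (1 / \<alpha>) * (q y * r y x) powr (1 - 1 / \<alpha>))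
      = inner_sum_real r x"
    unfolding inner_sum_real_def using feasibleD(3)[OF q \<alpha>1 x]
    by (intro sum.cong refl powr_pairing_tilt)
      (auto simp: \<alpha>_pos W_nonneg is_distD(1)[OF feasibleD(1)[OF q]] is_channelD(1)[OF r])
  then have C: "0 < C" and ln_B: "ln (inner_sum_real r x) \<le> 1 / \<alpha> * ln (tilt_norm q x) + (1 - 1 / \<alpha>) * ln C"
    using ln_sum_powr_mult_powr_le[of "1 / \<alpha>" "\<lambda>y. W x y powr \<alpha> * q y powr (1 - \<alpha>)" "\<lambda>y. q y * r y x"]
      \<alpha>1 B is_distD(1)[OF feasibleD(1)[OF q]] is_channelD(1)[OF r]
    unfolding C_def tilt_norm_def by auto
  then show "0 < C" by simp
  have "\<alpha> / (\<alpha> - 1) * ln (inner_sum_real r x)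
      \<le> \<alpha> / (\<alpha> - 1) * (1 / \<alpha> * ln (tilt_norm q x) + (1 - 1 / \<alpha>) * ln C)"
    using \<alpha>1 ln_B by (intro mult_left_mono) auto
  also have "\<dots> = ln (tilt_norm q x) / (\<alpha> - 1) + ln C"
    using \<alpha>1 by (simp add: field_simps)
  finally show "\<alpha> / (\<alpha> - 1) * ln (inner_sum_real r x) \<le> ln (tilt_norm q x) / (\<alpha> - 1) + ln C" .
qed

lemma inner_sum_real_holder_lt1:
  assumes \<alpha>1: "\<alpha> < 1" and q: "feasible q" and r: "is_channel r" and x: "0 < p x"
    and supp: "\<And>y. 0 < W x y \<Longrightarrow> 0 < r y x"
  defines "C \<equiv> \<Sum>y\<in>UNIV. q y * r y x"
  shows "0 < C" and "\<alpha> / (\<alpha> - 1) * ln (inner_sum_real r x) \<le> ln (tilt_norm q x) / (\<alpha> - 1) + ln C"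
proof -
  have "(\<Sum>y\<in>UNIV. (W x y * r y x powr (1 - 1 / \<alpha>)) powr \<alpha> * (q y * r y x) powr (1 - \<alpha>))
      = tilt_norm q x"
    unfolding tilt_norm_def using supp
    by (intro sum.cong refl powr_pairing_reverse)
      (auto simp: \<alpha>_pos W_nonneg is_distD(1)[OF feasibleD(1)[OF q]] is_channelD(1)[OF r])
  then have C: "0 < C" and ln_Z: "ln (tilt_norm q x) \<le> \<alpha> * ln (inner_sum_real r x) + (1 - \<alpha>) * ln C"
    using ln_sum_powr_mult_powr_le[of \<alpha> "\<lambda>y. W x y * r y x powr (1 - 1 / \<alpha>)" "\<lambda>y. q y * r y x"]
      \<alpha>1 \<alpha>_pos feasibleD(2)[OF q x] W_nonneg is_distD(1)[OF feasibleD(1)[OF q]] is_channelD(1)[OF r]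
    unfolding C_def inner_sum_real_def by auto
  then show "0 < C" by simp
  have "\<alpha> / (\<alpha> - 1) * ln (inner_sum_real r x) - ln C
      = (\<alpha> * ln (inner_sum_real r x) + (1 - \<alpha>) * ln C) / (\<alpha> - 1)"
    using \<alpha>1 by (simp add: field_simps)
  also have "\<dots> \<le> ln (tilt_norm q x) / (\<alpha> - 1)"
    using ln_Z \<alpha>1 by (intro divide_right_mono_neg) auto
  finally show "\<alpha> / (\<alpha> - 1) * ln (inner_sum_real r x) \<le> ln (tilt_norm q x) / (\<alpha> - 1) + ln C"
    by simp
qed

lemma F_C_tilde_MInfty:
  assumes \<alpha>1: "1 < \<alpha>" and xy: "0 < p x" "0 < V x y" and zero: "W x y = 0 \<or> r y x = 0"
  shows "F_C_tilde \<alpha> p W V r = -\<infinity>"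
proof -
  have neg: "\<alpha> / (1 - \<alpha>) < 0" using \<alpha>1 by (simp add: divide_pos_neg)
  show ?thesis
  proof (cases "W x y = 0")
    case True
    then have "KL (joint p V) (joint p W) = \<infinity>" using xy by (intro KL_joint_PInfty) auto
    then show ?thesis
      using neg \<alpha>1 exp_log_ratio_neq_PInfty[of p V r] by (simp add: F_C_tilde_def)
  next
    case False
    then have "exp_log_ratio p V r = -\<infinity>"
      using xy zero by (intro exp_log_ratio_MInfty) auto
    moreover have "ereal (\<alpha> / (1 - \<alpha>)) * KL (joint p V) (joint p W) \<noteq> \<infinity>"
      using neg KL_neq_MInfty[of "joint p V" "joint p W"]
      by (cases "KL (joint p V) (joint p W)") auto
    ultimately show ?thesis by (simp add: F_C_tilde_def)
  qed
qed

lemma ln_ratio_mean_reverse_le: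
  assumes \<alpha>1: "1 < \<alpha>" and V: "is_channel V" and x: "0 < p x"
    and supp: "\<And>y. 0 < V x y \<Longrightarrow> 0 < W x y \<and> 0 < r y x"
  defines "u \<equiv> \<lambda>y. W x y * r y x powr (1 - 1 / \<alpha>) * p x powr - (1 - 1 / \<alpha>)"
  shows "0 < inner_sum_real r x"
    and "\<alpha> / (\<alpha> - 1) * ln_ratio_mean (V x) u \<le> \<alpha> / (\<alpha> - 1) * ln (inner_sum_real r x) - ln (p x)"
proof -
  have u_sum: "(\<Sum>y\<in>UNIV. u y) = inner_sum_real r x * p x powr - (1 - 1 / \<alpha>)"
    by (simp add: u_def inner_sum_real_def flip: sum_distrib_right)
  have u_nonneg: "0 \<le> u y" for y by (simp add: u_def W_nonneg)
  have u_pos: "0 < u y" if "0 < V x y" for y using supp[OF that] x by (simp add: u_def)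
  have "0 < (\<Sum>y\<in>UNIV. u y)"
    using sum_pos_if_dominates_dist[of "V x" u] is_channelD[OF V] u_nonneg u_pos
    by (simp add: is_dist_def)
  then show B: "0 < inner_sum_real r x" using x u_sum by (simp add: zero_less_mult_iff)
  have "ln_ratio_mean (V x) u \<le> ln (\<Sum>y\<in>UNIV. u y)"
    using is_channelD[OF V] u_nonneg u_pos by (intro ln_ratio_mean_le_ln_sum) (auto simp: is_dist_def)
  also have "\<dots> = ln (inner_sum_real r x) - (1 - 1 / \<alpha>) * ln (p x)"
    using x B by (simp add: u_sum ln_mult left_diff_distrib)
  finally have "\<alpha> / (\<alpha> - 1) * ln_ratio_mean (V x) u
      \<le> \<alpha> / (\<alpha> - 1) * (ln (inner_sum_real r x) - (1 - 1 / \<alpha>) * ln (p x))"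
    using \<alpha>1 by (intro mult_left_mono) auto
  also have "\<dots> = \<alpha> / (\<alpha> - 1) * ln (inner_sum_real r x) - ln (p x)"
    using \<alpha>1 by (simp add: field_simps)
  finally show "\<alpha> / (\<alpha> - 1) * ln_ratio_mean (V x) u \<le> \<alpha> / (\<alpha> - 1) * ln (inner_sum_real r x) - ln (p x)" .
qed

lemma F_C_tilde_le_entropy_plus_G_obj:
  assumes \<alpha>1: "1 < \<alpha>" and V: "is_channel V" and r: "is_channel r"
  shows "F_C_tilde \<alpha> p W V r \<le> ereal (entropy p) + G_obj \<alpha> p W r"
proof (cases "\<forall>x y. 0 < p x \<longrightarrow> 0 < V x y \<longrightarrow> 0 < W x y \<and> 0 < r y x")
  case False
  then obtain x y where "0 < p x" "0 < V x y" "W x y = 0 \<or> r y x = 0"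
    using W_nonneg is_channelD(1)[OF r] by (auto simp: less_le)
  then show ?thesis using F_C_tilde_MInfty[OF \<alpha>1] by simp
next
  case True
  define u where "u x = (\<lambda>y. W x y * r y x powr (1 - 1 / \<alpha>) * p x powr - (1 - 1 / \<alpha>))" for x
  have B: "0 < inner_sum_real r x" if "0 < p x" for x
    by (rule ln_ratio_mean_reverse_le(1)[OF \<alpha>1 V that]) (use True that in blast)
  have bound: "\<alpha> / (\<alpha> - 1) * ln_ratio_mean (V x) (u x)
      \<le> \<alpha> / (\<alpha> - 1) * ln (inner_sum_real r x) - ln (p x)" if "0 < p x" for x
    unfolding u_def by (rule ln_ratio_mean_reverse_le(2)[OF \<alpha>1 V that]) (use True that in blast)
  have G: "G_obj \<alpha> p W r = ereal (\<alpha> / (\<alpha> - 1) * (\<Sum>x\<in>UNIV. p x * ln (inner_sum_real r x)))"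
    using \<alpha>1 B by (intro G_obj_real) (auto intro: inner_sum_eq_real)
  have "p x * (\<alpha> / (\<alpha> - 1) * ln_ratio_mean (V x) (u x))
      \<le> p x * (\<alpha> / (\<alpha> - 1) * ln (inner_sum_real r x) - ln (p x))" for x
  proof (cases "p x = 0")
    case False
    then show ?thesis using bound[of x] p_pos_iff[of x] by (intro mult_left_mono) auto
  qed simp
  then have "(\<Sum>x\<in>UNIV. p x * (\<alpha> / (\<alpha> - 1) * ln_ratio_mean (V x) (u x)))
      \<le> (\<Sum>x\<in>UNIV. p x * (\<alpha> / (\<alpha> - 1) * ln (inner_sum_real r x) - ln (p x)))"
    by (rule sum_mono)
  also have "\<dots> = entropy p + \<alpha> / (\<alpha> - 1) * (\<Sum>x\<in>UNIV. p x * ln (inner_sum_real r x))"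
    by (simp add: entropy_eq_sum right_diff_distrib sum_subtractf sum_distrib_left mult.left_commute)
  finally have le: "(\<Sum>x\<in>UNIV. p x * (\<alpha> / (\<alpha> - 1) * ln_ratio_mean (V x) (u x)))
      \<le> entropy p + \<alpha> / (\<alpha> - 1) * (\<Sum>x\<in>UNIV. p x * ln (inner_sum_real r x))" .
  have "F_C_tilde \<alpha> p W V r = ereal (\<Sum>x\<in>UNIV. p x * (\<alpha> / (\<alpha> - 1) * ln_ratio_mean (V x) (u x)))"
    unfolding u_def by (rule F_C_tilde_real[OF V]) (use True in blast)
  then show ?thesis using le by (simp add: G)
qed

lemma entropy_G_term_le:
  assumes q: "feasible q" and r: "is_channel r" and x: "0 < p x"
    and B: "0 < inner_sum_real r x" and supp: "\<And>y. \<alpha> < 1 \<Longrightarrow> 0 < W x y \<Longrightarrow> 0 < r y x"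
  defines "C \<equiv> \<Sum>y\<in>UNIV. q y * r y x"
  shows "p x * (\<alpha> / (\<alpha> - 1) * ln (inner_sum_real r x) - ln (p x))
           \<le> p x * ln (tilt_norm q x) / (\<alpha> - 1) + (C - p x)"
proof -
  have "0 < C \<and> \<alpha> / (\<alpha> - 1) * ln (inner_sum_real r x) \<le> ln (tilt_norm q x) / (\<alpha> - 1) + ln C"
  proof (cases "\<alpha> < 1")
    case True
    then show ?thesis using inner_sum_real_holder_lt1[OF True q r x] supp unfolding C_def by blast
  next
    case False
    then have "1 < \<alpha>" using \<alpha>_neq_1 by simp
    then show ?thesis using inner_sum_real_holder_gt1[OF _ q r x B] unfolding C_def by blast
  qed
  then have C: "0 < C" and holder: "\<alpha> / (\<alpha> - 1) * ln (inner_sum_real r x) \<le> ln (tilt_norm q x) / (\<alpha> - 1) + ln C"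
    by auto
  have "p x * ln (C / p x) \<le> p x * (C / p x - 1)"
    using C x by (intro mult_left_mono ln_le_minus_one) auto
  then have "p x * (ln C - ln (p x)) \<le> C - p x"
    using C x by (simp add: ln_div right_diff_distrib)
  moreover have "p x * (\<alpha> / (\<alpha> - 1) * ln (inner_sum_real r x) - ln (p x))
      \<le> p x * (ln (tilt_norm q x) / (\<alpha> - 1) + ln C - ln (p x))"
    using holder x by (intro mult_left_mono) auto
  ultimately show ?thesis by (simp add: algebra_simps)
qed

lemma entropy_plus_G_obj_le_avg_renyi:
  assumes q: "is_dist q" and r: "is_channel r"
  shows "ereal (entropy p) + G_obj \<alpha> p W r \<le> avg_renyi q"
proof (cases "feasible q")
  case False
  then show ?thesis using avg_renyi_infeasible[OF q] by simp
next
  case feasible: True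
  show ?thesis
    using G_obj_cases[OF r]
  proof
    assume good: "\<forall>x. 0 < p x \<longrightarrow> (\<forall>y. \<alpha> < 1 \<longrightarrow> 0 < W x y \<longrightarrow> 0 < r y x) \<and> 0 < inner_sum_real r x"
    define C where "C x = (\<Sum>y\<in>UNIV. q y * r y x)" for x
    have sum_C: "(\<Sum>x\<in>UNIV. C x) = 1"
      unfolding C_def using is_distD(2)[OF q] is_channelD(2)[OF r]
      by (subst sum.swap) (simp flip: sum_distrib_left)
    have G: "G_obj \<alpha> p W r = ereal (\<alpha> / (\<alpha> - 1) * (\<Sum>x\<in>UNIV. p x * ln (inner_sum_real r x)))"
      using good by (intro G_obj_real) (auto intro: inner_sum_eq_real)
    have "p x * (\<alpha> / (\<alpha> - 1) * ln (inner_sum_real r x) - ln (p x))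
        \<le> p x * ln (tilt_norm q x) / (\<alpha> - 1) + (C x - p x)" for x
    proof (cases "p x = 0")
      case False
      then have "0 < p x" using p_pos_iff by simp
      then show ?thesis using entropy_G_term_le[OF feasible r] good unfolding C_def by blast
    qed (simp add: C_def sum_nonneg is_distD(1)[OF q] is_channelD(1)[OF r])
    then have "(\<Sum>x\<in>UNIV. p x * (\<alpha> / (\<alpha> - 1) * ln (inner_sum_real r x) - ln (p x)))
        \<le> (\<Sum>x\<in>UNIV. p x * ln (tilt_norm q x) / (\<alpha> - 1) + (C x - p x))"
      by (rule sum_mono)
    also have "\<dots> = aug_obj q"
      by (simp add: aug_obj_def sum.distrib sum_subtractf sum_C sum_p sum_divide_distrib)
    also have "(\<Sum>x\<in>UNIV. p x * (\<alpha> / (\<alpha> - 1) * ln (inner_sum_real r x) - ln (p x)))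
        = entropy p + \<alpha> / (\<alpha> - 1) * (\<Sum>x\<in>UNIV. p x * ln (inner_sum_real r x))"
      by (simp add: entropy_eq_sum right_diff_distrib sum_subtractf sum_distrib_left mult.left_commute)
    finally show ?thesis by (simp add: G avg_renyi_feasible[OF feasible])
  qed simp
qed

lemma inner_sum_reverse:
  assumes q: "augustin_mean q" and x: "0 < p x"
  shows "inner_sum_real (reverse q) x = p x powr (1 - 1 / \<alpha>) * tilt_norm q x powr (1 / \<alpha>)"
    and "inner_sum \<alpha> W (reverse q) x = ereal (inner_sum_real (reverse q) x)"
proof -
  have feasible: "feasible q" using q by (simp add: augustin_mean_def)
  have Z: "0 < tilt_norm q x" using feasibleD(2)[OF feasible x] .
  have reverse_eq: "reverse q y x = p x * (W x y powr \<alpha> * q y powr (1 - \<alpha>) / tilt_norm q x) / q y"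
    and reverse_pos: "0 < reverse q y x" if "0 < W x y" for y
    using augustin_mean_support[OF q x that] x that Z by (simp_all add: reverse_def tilted_def)
  have "W x y * reverse q y x powr (1 - 1 / \<alpha>)
      = p x powr (1 - 1 / \<alpha>) * tilt_norm q x powr - (1 - 1 / \<alpha>) * (W x y powr \<alpha> * q y powr (1 - \<alpha>))"
    for y
  proof (cases "W x y = 0")
    case False
    then have "0 < W x y" using W_nonneg[of x y] by simp
    then show ?thesis
      using reverse_eq powr_reverse_term[OF \<alpha>_pos _ x augustin_mean_support[OF q x] Z] by simp
  qed simp
  then have "inner_sum_real (reverse q) x
      = p x powr (1 - 1 / \<alpha>) * (tilt_norm q x powr - (1 - 1 / \<alpha>) * tilt_norm q x powr 1)"
    using Z by (simp add: inner_sum_real_def tilt_norm_def sum_distrib_left mult.assoc)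
  also have "\<dots> = p x powr (1 - 1 / \<alpha>) * tilt_norm q x powr (1 / \<alpha>)"
    unfolding powr_add[symmetric] by simp
  finally show "inner_sum_real (reverse q) x = p x powr (1 - 1 / \<alpha>) * tilt_norm q x powr (1 / \<alpha>)" .
  show "inner_sum \<alpha> W (reverse q) x = ereal (inner_sum_real (reverse q) x)"
    by (rule inner_sum_eq_real) (rule reverse_pos)
qed

lemma entropy_plus_G_obj_reverse:
  assumes q: "augustin_mean q"
  shows "ereal (entropy p) + G_obj \<alpha> p W (reverse q) = ereal (aug_obj q)"
proof -
  have feasible: "feasible q" using q by (simp add: augustin_mean_def)
  have G: "G_obj \<alpha> p W (reverse q) = ereal (\<alpha> / (\<alpha> - 1) *
      (\<Sum>x\<in>UNIV. p x * ln (inner_sum_real (reverse q) x)))"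
  proof (rule G_obj_real)
    fix x assume x: "0 < p x"
    have "0 < inner_sum_real (reverse q) x"
      using inner_sum_reverse(1)[OF q x] x feasibleD(2)[OF feasible x] by simp
    then show "inner_sum \<alpha> W (reverse q) x = ereal (inner_sum_real (reverse q) x) \<and>
        0 < inner_sum_real (reverse q) x"
      using inner_sum_reverse(2)[OF q x] by simp
  qed
  have "\<alpha> / (\<alpha> - 1) * (p x * ln (inner_sum_real (reverse q) x))
      = p x * ln (p x) + p x * ln (tilt_norm q x) / (\<alpha> - 1)" for x
  proof (cases "p x = 0")
    case False
    then have x: "0 < p x" using p_pos_iff by simp
    have "ln (inner_sum_real (reverse q) x) = (1 - 1 / \<alpha>) * ln (p x) + 1 / \<alpha> * ln (tilt_norm q x)"
      using x feasibleD(2)[OF feasible x] by (simp add: inner_sum_reverse(1)[OF q x] ln_mult)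
    then have "\<alpha> / (\<alpha> - 1) * ln (inner_sum_real (reverse q) x) = ln (p x) + ln (tilt_norm q x) / (\<alpha> - 1)"
      using \<alpha>_pos \<alpha>_neq_1 by (simp add: field_simps)
    then show ?thesis by (simp add: algebra_simps)
  qed simp
  then have "\<alpha> / (\<alpha> - 1) * (\<Sum>x\<in>UNIV. p x * ln (inner_sum_real (reverse q) x))
      = (\<Sum>x\<in>UNIV. p x * ln (p x)) + aug_obj q"
    by (simp add: sum_distrib_left sum.distrib aug_obj_def sum_divide_distrib)
  then show ?thesis by (simp add: G entropy_eq_sum)
qed

lemma SUP_F_C_tilde_eq_aug_obj:
  assumes \<alpha>1: "1 < \<alpha>" and q0: "augustin_mean q0"
  shows "(SUP V\<in>{V. is_channel V}. SUP r\<in>{r. is_channel r}. F_C_tilde \<alpha> p W V r) = ereal (aug_obj q0)"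
proof (rule antisym)
  have feasible: "feasible q0" using q0 by (simp add: augustin_mean_def)
  have "F_C_tilde \<alpha> p W V r \<le> ereal (aug_obj q0)" if "is_channel V" "is_channel r" for V r
    using F_C_tilde_le_entropy_plus_G_obj[OF \<alpha>1 that] entropy_plus_G_obj_le_avg_renyi[OF _ that(2)]
      feasibleD(1)[OF feasible] avg_renyi_feasible[OF feasible] by (metis order_trans)
  then show "(SUP V\<in>{V. is_channel V}. SUP r\<in>{r. is_channel r}. F_C_tilde \<alpha> p W V r) \<le> ereal (aug_obj q0)"
    by (intro SUP_least) auto
  show "ereal (aug_obj q0) \<le> (SUP V\<in>{V. is_channel V}. SUP r\<in>{r. is_channel r}. F_C_tilde \<alpha> p W V r)"
    using is_channel_tilted[OF feasible] is_channel_reverse[OF q0]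
      F_C_tilde_tilted_reverse[OF feasible] F_C_tilted[OF feasible]
    by (intro SUP_upper2[of "tilted q0"] SUP_upper2[of "reverse q0"]) auto
qed

lemma SUP_G_obj_eq_aug_obj:
  assumes q0: "augustin_mean q0"
  shows "ereal (entropy p) + (SUP r\<in>{r. is_channel r}. G_obj \<alpha> p W r) = ereal (aug_obj q0)"
proof -
  have feasible: "feasible q0" using q0 by (simp add: augustin_mean_def)
  have "ereal (entropy p) + (SUP r\<in>{r. is_channel r}. G_obj \<alpha> p W r)
      = (SUP r\<in>{r. is_channel r}. ereal (entropy p) + G_obj \<alpha> p W r)"
    using is_channel_reverse[OF q0] by (intro SUP_ereal_add_right[symmetric]) auto
  also have "\<dots> = ereal (aug_obj q0)"
  proof (rule antisym)
    show "(SUP r\<in>{r. is_channel r}. ereal (entropy p) + G_obj \<alpha> p W r) \<le> ereal (aug_obj q0)"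
      using entropy_plus_G_obj_le_avg_renyi[OF feasibleD(1)[OF feasible]]
        avg_renyi_feasible[OF feasible] by (intro SUP_least) auto
    show "ereal (aug_obj q0) \<le> (SUP r\<in>{r. is_channel r}. ereal (entropy p) + G_obj \<alpha> p W r)"
      using is_channel_reverse[OF q0] entropy_plus_G_obj_reverse[OF q0]
      by (intro SUP_upper2[of "reverse q0"]) auto
  qed
  finally show ?thesis .
qed

end

theorem theorem2:
  fixes \<alpha> :: real and pX :: "'a::finite \<Rightarrow> real" and W :: "'a \<Rightarrow> 'b::finite \<Rightarrow> real"
  assumes "0 < \<alpha>" and "\<alpha> \<noteq> 1"
    and "is_dist pX" and "is_channel W"
  shows "(\<alpha> < 1 \<longrightarrow>
            I_C \<alpha> pX W = (INF V\<in>{V. is_channel V}. INF q\<in>{q. is_dist q}. F_C \<alpha> pX W V q) \<and>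
            (\<exists>V q. is_channel V \<and> is_dist q \<and> F_C \<alpha> pX W V q = I_C \<alpha> pX W))
       \<and> (\<alpha> > 1 \<longrightarrow>
            I_C \<alpha> pX W = (SUP V\<in>{V. is_channel V}. SUP r\<in>{r. is_channel r}. F_C_tilde \<alpha> pX W V r) \<and>
            (\<exists>V r. is_channel V \<and> is_channel r \<and> F_C_tilde \<alpha> pX W V r = I_C \<alpha> pX W))
       \<and> I_C \<alpha> pX W = ereal (entropy pX) + (SUP r\<in>{r. is_channel r}. G_obj \<alpha> pX W r)
       \<and> (\<exists>r. is_channel r \<and> I_C \<alpha> pX W = ereal (entropy pX) + G_obj \<alpha> pX W r)"
proof -
  interpret augustin \<alpha> pX W using assms by unfold_locales
  obtain q0 where q0: "augustin_mean q0" by (rule augustin_mean_exists)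
  then have feasible: "feasible q0" by (simp add: augustin_mean_def)
  have I_C: "I_C \<alpha> pX W = ereal (aug_obj q0)" by (rule I_C_eq_aug_obj[OF q0])
  have V: "is_channel (tilted q0)" and r: "is_channel (reverse q0)" and q: "is_dist q0"
    using is_channel_tilted[OF feasible] is_channel_reverse[OF q0] feasibleD(1)[OF feasible] .
  show ?thesis
  proof (intro conjI impI)
    assume "\<alpha> < 1"
    show "I_C \<alpha> pX W = (INF V\<in>{V. is_channel V}. INF q\<in>{q. is_dist q}. F_C \<alpha> pX W V q)"
      using I_C INF_F_C_eq_aug_obj[OF \<open>\<alpha> < 1\<close> q0] by simp
    show "\<exists>V q. is_channel V \<and> is_dist q \<and> F_C \<alpha> pX W V q = I_C \<alpha> pX W"
      using V q I_C F_C_tilted[OF feasible] by auto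
  next
    assume "\<alpha> > 1"
    show "I_C \<alpha> pX W = (SUP V\<in>{V. is_channel V}. SUP r\<in>{r. is_channel r}. F_C_tilde \<alpha> pX W V r)"
      using I_C SUP_F_C_tilde_eq_aug_obj[OF \<open>\<alpha> > 1\<close> q0] by simp
    show "\<exists>V r. is_channel V \<and> is_channel r \<and> F_C_tilde \<alpha> pX W V r = I_C \<alpha> pX W"
      using V r I_C F_C_tilde_tilted_reverse[OF feasible] F_C_tilted[OF feasible] by auto
  next
    show "I_C \<alpha> pX W = ereal (entropy pX) + (SUP r\<in>{r. is_channel r}. G_obj \<alpha> pX W r)"
      using I_C SUP_G_obj_eq_aug_obj[OF q0] by simp
    show "\<exists>r. is_channel r \<and> I_C \<alpha> pX W = ereal (entropy pX) + G_obj \<alpha> pX W r"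
      using r I_C entropy_plus_G_obj_reverse[OF q0] by auto
  qed
qed

end
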